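(* Let $a,b\ge0$ be integers with $a+b\ge1$, and $R>0$. For every $\zeta\in D^{a+b}_R$, the function $\mathcal{R}^{a,b}(\zeta)$ on $(0,\infty)^2$ extends to a continuous function on $[0,\infty)^2$ with support contained in $B_R(0)$. Moreover, the resulting map $\mathcal{R}^{a,b}:D^{a+b}_R\to C_{c,R}([0,\infty)^2)$ is continuous.
   Context: $C_b((0,\infty))$: continuous functions on $(0,\infty)$ with support bounded above. For $c>0$, $D^{c}_R$ is the set of $\zeta\in C_b((0,\infty))$ with support in $(0,R]$, $\lim_{t\to0}t^c\zeta(t)=0$, and $\lim_{t\to0}\int_t^\infty\zeta(r)r^{c-1}dr$ existing and finite, normed by $\|\zeta\|_{D^c}=\sup_{t>0}t^c|\zeta(t)|+\sup_{t>0}|\int_t^\infty\zeta(r)r^{c-1}dr|$. For $\zeta\in C_b((0,\infty))$ and $s,t>0$, $\mathcal{R}^{a,b}(\zeta)[s,t]=t^bs^a\zeta(\sqrt{s^2+t^2})+at^b\int_s^\infty\zeta(\sqrt{u^2+t^2})u^{a-1}du+bs^a\int_t^\infty\zeta(\sqrt{s^2+v^2})v^{b-1}dv+ab\int_t^\infty\int_s^\infty\zeta(\sqrt{u^2+v^2})u^{a-1}v^{b-1}du\,dv$. $C_{c,R}([0,\infty)^2)$: continuous functions on $[0,\infty)^2$ supported in $B_R(0)=\{|x|\le R\}$, with the maximum norm. *)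

theory Defs
  imports "HOL-Analysis.Analysis"
begin

text \<open>Functions on (0,inf) are modelled as real => real; only values at t > 0 matter.\<close>

definition Dspace :: "real \<Rightarrow> real \<Rightarrow> (real \<Rightarrow> real) set" where
  "Dspace c R = {\<zeta>. continuous_on {0<..} \<zeta>
      \<and> (\<forall>t>0. \<zeta> t \<noteq> 0 \<longrightarrow> t \<le> R)
      \<and> ((\<lambda>t. t powr c * \<zeta> t) \<longlongrightarrow> 0) (at_right 0)
      \<and> (\<exists>L. ((\<lambda>t. integral {t..} (\<lambda>r. \<zeta> r * r powr (c - 1))) \<longlongrightarrow> L) (at_right 0))}"

definition Dnorm :: "real \<Rightarrow> (real \<Rightarrow> real) \<Rightarrow> real" where
  "Dnorm c \<zeta> = (SUP t\<in>{0<..}. \<bar>t powr c * \<zeta> t\<bar>)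
              + (SUP t\<in>{0<..}. \<bar>integral {t..} (\<lambda>r. \<zeta> r * r powr (c - 1))\<bar>)"

definition Rop :: "nat \<Rightarrow> nat \<Rightarrow> (real \<Rightarrow> real) \<Rightarrow> real \<Rightarrow> real \<Rightarrow> real" where
  "Rop a b \<zeta> s t =
     t ^ b * s ^ a * \<zeta> (sqrt (s\<^sup>2 + t\<^sup>2))
   + real a * t ^ b * integral {s..} (\<lambda>u. \<zeta> (sqrt (u\<^sup>2 + t\<^sup>2)) * u powr (real a - 1))
   + real b * s ^ a * integral {t..} (\<lambda>v. \<zeta> (sqrt (s\<^sup>2 + v\<^sup>2)) * v powr (real b - 1))
   + real a * real b * integral ({s..} \<times> {t..})
        (\<lambda>(u, v). \<zeta> (sqrt (u\<^sup>2 + v\<^sup>2)) * u powr (real a - 1) * v powr (real b - 1))"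

definition Quad :: "(real \<times> real) set" where
  "Quad = {0..} \<times> {0..}"

definition is_ext :: "nat \<Rightarrow> nat \<Rightarrow> real \<Rightarrow> (real \<Rightarrow> real) \<Rightarrow> (real \<times> real \<Rightarrow> real) \<Rightarrow> bool" where
  "is_ext a b R \<zeta> F \<longleftrightarrow> continuous_on Quad F
      \<and> (\<forall>s>0. \<forall>t>0. F (s, t) = Rop a b \<zeta> s t)
      \<and> closure {x \<in> Quad. F x \<noteq> 0} \<subseteq> cball 0 R"

definition Rext :: "nat \<Rightarrow> nat \<Rightarrow> real \<Rightarrow> (real \<Rightarrow> real) \<Rightarrow> (real \<times> real \<Rightarrow> real)" where
  "Rext a b R \<zeta> = (SOME F. is_ext a b R \<zeta> F)"

end

theory Submission
  imports Defs
begin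

(*
  Write r = sqrt (u^2 + v^2), c = a + b and J(r) for the tail integral of zeta(rho) rho^(c-1) over
  [r, oo).  Every term of R^{a,b}(zeta)[s,t] is bounded by a constant depending only on a and b times
  the D^c-norm of zeta.  For a single integral with both exponents positive this follows from
  u^(a-1) t^b <= t r^(c-2) and the fact that t / (u^2 + t^2) integrates to at most pi/2.  When b = 0 one
  first integrates by parts against J(r) u^a / r^a, which replaces zeta by J; the integrand of the
  double integral is a divergence of the same kind, so it reduces to one-dimensional integrals of J.
  Since R^{a,b} is linear in zeta, this bound gives the continuity of the map.

  For the extension, the truncations zeta (max r delta) are continuous on the whole line, so every term
  of R^{a,b} of them is a parameter integral over a compact set and extends continuously to the closed
  quadrant.  As delta -> 0 they converge to zeta in the D^c-norm, so by the bound their extensions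
  converge uniformly; the limit extends R^{a,b}(zeta) and vanishes outside B_R(0), because
  R^{a,b}(zeta)[s,t] = 0 as soon as s^2 + t^2 > R^2.
*)

section \<open>Integrals over half-lines and quadrants\<close>

lemma has_integral_atLeast_vanishing:
  fixes h :: "real \<Rightarrow> real"
  assumes "continuous_on {x..K} h" "\<And>u. u > K \<Longrightarrow> h u = 0"
  shows "(h has_integral integral {x..K} h) {x..}"
proof -
  have "(h has_integral integral {x..K} h) {x..K}"
    using integrable_continuous_real[OF assms(1)] by (simp add: integrable_integral)
  then have "((\<lambda>u. if u \<in> {x..K} then h u else 0) has_integral integral {x..K} h) UNIV"
    by (simp only: has_integral_restrict_UNIV)
  moreover have "(\<lambda>u. if u \<in> {x..K} then h u else 0) = (\<lambda>u. if u \<in> {x..} then h u else 0)"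
    using assms(2) by (force simp: fun_eq_iff)
  ultimately show ?thesis by (simp only: has_integral_restrict_UNIV)
qed

lemma has_integral_quadrant_vanishing:
  fixes F :: "real \<times> real \<Rightarrow> real"
  assumes "continuous_on (cbox (s,t) (K,K)) F" "\<And>u v. u > K \<or> v > K \<Longrightarrow> F (u,v) = 0"
  shows "(F has_integral integral (cbox (s,t) (K,K)) F) ({s..} \<times> {t..})"
proof -
  have "(F has_integral integral (cbox (s,t) (K,K)) F) (cbox (s,t) (K,K))"
    using integrable_continuous[OF assms(1)] by (simp add: integrable_integral)
  then have "((\<lambda>u. if u \<in> cbox (s,t) (K,K) then F u else 0) has_integral integral (cbox (s,t) (K,K)) F) UNIV"
    by (simp only: has_integral_restrict_UNIV)
  moreover have "(\<lambda>u. if u \<in> cbox (s,t) (K,K) then F u else 0) = (\<lambda>u. if u \<in> {s..} \<times> {t..} then F u else 0)"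
    using assms(2) by (force simp: fun_eq_iff cbox_Pair_eq)
  ultimately show ?thesis by (simp only: has_integral_restrict_UNIV)
qed

lemma has_integral_Cauchy_kernel:
  fixes x K y :: real
  assumes "0 < y" "x \<le> K"
  shows "((\<lambda>u. y / (u\<^sup>2 + y\<^sup>2)) has_integral (arctan (K/y) - arctan (x/y))) {x..K}"
proof (rule fundamental_theorem_of_calculus[OF assms(2)])
  fix u :: real
  have "((\<lambda>u. arctan (u/y)) has_real_derivative (inverse (1 + (u/y)\<^sup>2) * (1/y))) (at u)"
    using assms(1) by (auto intro!: derivative_eq_intros)
  moreover have "inverse (1 + (u/y)\<^sup>2) * (1/y) = y / (u\<^sup>2 + y\<^sup>2)"
    using assms(1) by (simp add: field_simps power2_eq_square)
  ultimately show "((\<lambda>u. arctan (u/y)) has_vector_derivative y / (u\<^sup>2 + y\<^sup>2)) (at u within {x..K})"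
    by (simp add: has_real_derivative_iff_has_vector_derivative[symmetric] has_field_derivative_at_within)
qed

lemma integral_bound_Cauchy_kernel:
  fixes h :: "real \<Rightarrow> real"
  assumes "continuous_on {x..K} h" "0 \<le> x" "0 < y" "x \<le> K" "0 \<le> B"
    and "\<And>u. u \<in> {x..K} \<Longrightarrow> \<bar>h u\<bar> \<le> B * (y / (u\<^sup>2 + y\<^sup>2))"
  shows "\<bar>integral {x..K} h\<bar> \<le> B * pi / 2"
proof -
  have kernel: "((\<lambda>u. B * (y / (u\<^sup>2 + y\<^sup>2))) has_integral (B * (arctan (K/y) - arctan (x/y)))) {x..K}"
    using has_integral_mult_right[OF has_integral_Cauchy_kernel[OF assms(3,4)]] by simp
  have "arctan (K/y) < pi/2" "0 \<le> arctan (x/y)"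
    using arctan_ubound[of "K/y"] assms(2,3) by (simp_all add: zero_le_arctan_iff)
  then have "arctan (K/y) - arctan (x/y) \<le> pi/2" by linarith
  have "norm (integral {x..K} h) \<le> integral {x..K} (\<lambda>u. B * (y / (u\<^sup>2 + y\<^sup>2)))"
    by (rule integral_norm_bound_integral)
       (use integrable_continuous_real[OF assms(1)] kernel assms(6) in auto)
  also have "\<dots> = B * (arctan (K/y) - arctan (x/y))" using kernel by (simp add: integral_unique)
  also have "\<dots> \<le> B * (pi/2)"
    using \<open>arctan (K/y) - arctan (x/y) \<le> pi/2\<close> assms(5) by (rule mult_left_mono)
  finally show ?thesis by simp
qed

section \<open>Profiles supported in (0, R] and their tail integrals\<close>

definition cont_supp :: "real \<Rightarrow> (real \<Rightarrow> real) \<Rightarrow> bool" where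
  "cont_supp R f \<longleftrightarrow> continuous_on {0<..} f \<and> (\<forall>x>R. f x = 0)"

definition tail_int :: "real \<Rightarrow> (real \<Rightarrow> real) \<Rightarrow> real \<Rightarrow> real" where
  "tail_int c f x = integral {x..} (\<lambda>r. f r * r powr (c - 1))"

lemma cont_supp_vanishes: "cont_supp R f \<Longrightarrow> R < x \<Longrightarrow> f x = 0"
  unfolding cont_supp_def by blast

lemma cont_supp_continuous_on: "cont_supp R f \<Longrightarrow> continuous_on {0<..} f"
  unfolding cont_supp_def by blast

lemma cont_supp_continuous_on_Icc:
  assumes "cont_supp R f" "0 < x"
  shows "continuous_on {x..K} f"
  by (rule continuous_on_subset[OF cont_supp_continuous_on[OF assms(1)]]) (use assms(2) in auto)

lemma cont_supp_diff: "cont_supp R f \<Longrightarrow> cont_supp R g \<Longrightarrow> cont_supp R (\<lambda>x. f x - g x)"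
  unfolding cont_supp_def by (auto intro: continuous_on_diff)

lemma continuous_on_tail_integrand:
  "cont_supp R f \<Longrightarrow> 0 < x \<Longrightarrow> continuous_on {x..K} (\<lambda>r. f r * r powr (c - 1))"
  by (intro continuous_intros cont_supp_continuous_on_Icc) auto

lemma has_integral_tail_int:
  assumes "cont_supp R f" "0 < x" "R < K"
  shows "((\<lambda>r. f r * r powr (c - 1)) has_integral integral {x..K} (\<lambda>r. f r * r powr (c - 1))) {x..}"
  by (rule has_integral_atLeast_vanishing[OF continuous_on_tail_integrand[OF assms(1,2)]])
     (use cont_supp_vanishes[OF assms(1)] assms in force)

lemma tail_int_eq_integral_Icc:
  assumes "cont_supp R f" "0 < x" "R < K"
  shows "tail_int c f x = integral {x..K} (\<lambda>r. f r * r powr (c - 1))"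
  unfolding tail_int_def using has_integral_tail_int[OF assms] by (rule integral_unique)

lemma tail_int_vanishes:
  assumes "cont_supp R f" "R < x"
  shows "tail_int c f x = 0"
proof -
  have "tail_int c f x = integral {x..} (\<lambda>r. 0::real)" unfolding tail_int_def
    by (rule integral_cong) (use assms cont_supp_vanishes[OF assms(1)] in auto)
  then show ?thesis by simp
qed

lemma has_real_derivative_tail_int:
  assumes "cont_supp R f" "0 < x"
  shows "(tail_int c f has_real_derivative (- (f x * x powr (c - 1)))) (at x)"
proof -
  define K where "K = max R x + 1"
  define g where "g = (\<lambda>r. f r * r powr (c - 1))"
  have K: "R < K" "x < K" unfolding K_def by auto
  have cg: "continuous_on {x/2..K} g"
    unfolding g_def using continuous_on_tail_integrand[OF assms(1)] assms(2) by simp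
  have eq: "tail_int c f y = integral {x/2..K} g - integral {x/2..y} g" if "y \<in> {x/2<..<K}" for y
  proof -
    have "tail_int c f y = integral {y..K} g" unfolding g_def
      by (rule tail_int_eq_integral_Icc[OF assms(1) _ K(1)]) (use that assms in auto)
    moreover have "integral {x/2..y} g + integral {y..K} g = integral {x/2..K} g"
      by (rule Henstock_Kurzweil_Integration.integral_combine)
         (use that cg integrable_continuous_real in auto)
    ultimately show ?thesis by simp
  qed
  have "((\<lambda>y. integral {x/2..y} g) has_real_derivative g x) (at x within {x/2..K})"
    by (rule integral_has_real_derivative[OF cg]) (use K assms in auto)
  then have "((\<lambda>y. integral {x/2..y} g) has_real_derivative g x) (at x)"
    using at_within_Icc_at[of "x/2" x K] K assms by simp
  then have "((\<lambda>y. integral {x/2..K} g - integral {x/2..y} g) has_real_derivative (- g x)) (at x)"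
    by (auto intro!: derivative_eq_intros)
  then have "((\<lambda>y. integral {x/2..K} g - integral {x/2..y} g) has_real_derivative (- (f x * x powr (c - 1)))) (at x)"
    by (simp add: g_def)
  then show ?thesis
    by (rule has_field_derivative_transform_within_open[where S="{x/2<..<K}"])
       (use K assms eq in simp_all)
qed

lemma continuous_on_tail_int:
  assumes "cont_supp R f"
  shows "continuous_on {0<..} (tail_int c f)"
  by (intro continuous_at_imp_continuous_on ballI DERIV_isCont[OF has_real_derivative_tail_int[OF assms]])
     simp

section \<open>The a priori bound for R^{a,b}\<close>

lemma sqrt_sum_squares_bounds:
  fixes u y :: real
  assumes "0 < y"
  shows "0 < sqrt (u^2 + y^2)" "\<bar>u\<bar> \<le> sqrt (u^2 + y^2)" "y \<le> sqrt (u^2 + y^2)"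
    "(sqrt (u^2 + y^2))^2 = u^2 + y^2"
proof -
  show "0 < sqrt (u^2 + y^2)" using assms by (simp add: add_nonneg_pos)
  show "\<bar>u\<bar> \<le> sqrt (u^2 + y^2)" by (rule real_sqrt_ge_abs1)
  show "y \<le> sqrt (u^2 + y^2)" using real_sqrt_ge_abs1[of y "u^2"] by (simp add: add.commute)
  show "(sqrt (u^2 + y^2))^2 = u^2 + y^2" by (simp add: add_nonneg_nonneg)
qed

lemma less_sqrt_sum_squares:
  fixes u v R :: real
  assumes "R < \<bar>u\<bar> \<or> R < \<bar>v\<bar>"
  shows "R < sqrt (u^2 + v^2)"
proof -
  have "\<bar>u\<bar> \<le> sqrt (u^2 + v^2)" "\<bar>v\<bar> \<le> sqrt (u^2 + v^2)" by simp_all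
  then show ?thesis using assms by linarith
qed

lemma continuous_on_radial:
  assumes "continuous_on {0<..} g" "0 < y"
  shows "continuous_on S (\<lambda>u. g (sqrt (u^2 + y^2)))"
  by (rule continuous_on_compose2[OF assms(1), where f="\<lambda>u. sqrt (u^2 + y^2)"])
     (use sqrt_sum_squares_bounds(1)[OF assms(2)] in \<open>auto intro!: continuous_intros\<close>)

lemma continuous_on_radial2:
  assumes "continuous_on {0<..} g" "\<And>z. z \<in> S \<Longrightarrow> 0 < snd z"
  shows "continuous_on S (\<lambda>z. g (sqrt (fst z^2 + snd z^2)))"
  by (rule continuous_on_compose2[OF assms(1), where f="\<lambda>z. sqrt (fst z^2 + snd z^2)"])
     (use assms(2) sqrt_sum_squares_bounds(1) in \<open>auto intro!: continuous_intros\<close>)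

lemma has_integral_radial_tail:
  assumes f: "cont_supp R f" and "0 < x" "0 < y" "R < K"
  shows "((\<lambda>u. f (sqrt (u^2 + y^2)) * u powr e) has_integral
           integral {x..K} (\<lambda>u. f (sqrt (u^2 + y^2)) * u powr e)) {x..}"
proof (rule has_integral_atLeast_vanishing)
  show "continuous_on {x..K} (\<lambda>u. f (sqrt (u^2 + y^2)) * u powr e)"
    by (intro continuous_intros continuous_on_radial[OF cont_supp_continuous_on[OF f] assms(3)])
       (use assms(2) in auto)
  fix u assume "u > K"
  then have "R < sqrt (u^2 + y^2)" using assms(4) by (intro less_sqrt_sum_squares) auto
  then show "f (sqrt (u^2 + y^2)) * u powr e = 0" using cont_supp_vanishes[OF f] by simp
qed

lemma integral_radial_tail_eq:
  assumes f: "cont_supp R f" and "0 < x" "0 < y" "R < K" "1 \<le> p"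
  shows "integral {x..} (\<lambda>u. f (sqrt (u^2 + y^2)) * u powr (real p - 1))
       = integral {x..K} (\<lambda>u. f (sqrt (u^2 + y^2)) * u ^ (p - 1))"
proof -
  have pm: "real p - 1 = real (p - 1)" using assms(5) by simp
  have "integral {x..K} (\<lambda>u. f (sqrt (u^2 + y^2)) * u powr (real p - 1))
       = integral {x..K} (\<lambda>u. f (sqrt (u^2 + y^2)) * u ^ (p - 1))"
    by (intro integral_cong) (use assms(2) in \<open>auto simp: pm powr_realpow\<close>)
  then show ?thesis using integral_unique[OF has_integral_radial_tail[OF assms(1-4)]] by simp
qed

lemma monomial_Cauchy_kernel_bound:
  fixes u y r z A :: real
  assumes "0 \<le> u" "0 \<le> y" "0 < r" "u \<le> r" "y \<le> r" "1 \<le> p" "1 \<le> q"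
    and "\<bar>r^(p+q) * z\<bar> \<le> A"
  shows "\<bar>y^q * (z * u^(p-1))\<bar> \<le> A * (y / r^2)"
proof -
  have "u^(p-1) * y^(q-1) \<le> r^(p-1) * r^(q-1)"
    using assms by (intro mult_mono power_mono) auto
  moreover have "p + q = (p-1) + (q-1) + 2" using assms(6,7) by simp
  then have "r^(p+q) = r^(p-1) * r^(q-1) * r^2" by (metis power_add)
  ultimately have P: "u^(p-1) * y^(q-1) * r^2 \<le> r^(p+q)" by (simp add: mult_right_mono)
  have yq: "y^q = y * y^(q-1)" using assms(7) by (metis Suc_diff_le diff_Suc_1 power_Suc)
  have "\<bar>y^q * (z * u^(p-1))\<bar> * r^2 = y * \<bar>z\<bar> * (u^(p-1) * y^(q-1) * r^2)"
    using assms(1,2) by (simp add: yq abs_mult)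
  also have "\<dots> \<le> y * \<bar>z\<bar> * r^(p+q)"
    using P assms(2) by (simp add: mult_left_mono)
  also have "\<dots> = y * \<bar>r^(p+q) * z\<bar>" using assms(3) by (simp add: abs_mult)
  also have "\<dots> \<le> y * A" using assms(2,8) by (simp add: mult_left_mono)
  finally have "\<bar>y^q * (z * u^(p-1))\<bar> * r^2 \<le> y * A" .
  then show ?thesis using assms(3) by (simp add: pos_le_divide_eq mult.commute)
qed

lemma Rop_first_term_bound:
  assumes st: "0 < s" "0 < t" and A0: "\<And>z. 0 < z \<Longrightarrow> \<bar>z powr real (a+b) * f z\<bar> \<le> A0"
  shows "\<bar>t^b * s^a * f (sqrt (s^2+t^2))\<bar> \<le> A0"
proof -
  define r where "r = sqrt (s^2+t^2)"
  have r: "0 < r" "s \<le> r" "t \<le> r" unfolding r_def using sqrt_sum_squares_bounds[OF st(2), of s] st by auto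
  have "t^b * s^a \<le> r^b * r^a" using r st by (intro mult_mono power_mono) auto
  then have "t^b * s^a \<le> r^(a+b)" by (simp add: power_add mult.commute)
  then have "\<bar>t^b * s^a * f r\<bar> \<le> \<bar>r^(a+b) * f r\<bar>" using st by (simp add: abs_mult mult_right_mono)
  also have "\<dots> \<le> A0" using A0[OF r(1)] unfolding powr_realpow[OF r(1)] .
  finally show ?thesis unfolding r_def .
qed

lemma tail_term_bound:
  assumes f: "cont_supp R f" and pq: "1 \<le> p" "1 \<le> q" and xy: "0 < x" "0 < y"
    and A0: "\<And>z. 0 < z \<Longrightarrow> \<bar>z powr real (p+q) * f z\<bar> \<le> A0"
  shows "\<bar>real p * y^q * integral {x..} (\<lambda>u. f (sqrt (u^2 + y^2)) * u powr (real p - 1))\<bar>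
           \<le> real p * A0 * pi / 2"
proof -
  define K where "K = max x R + 1"
  define h where "h = (\<lambda>u. y^q * (f (sqrt (u^2 + y^2)) * u ^ (p - 1)))"
  have K: "x \<le> K" "R < K" unfolding K_def by auto
  have "\<bar>integral {x..K} h\<bar> \<le> A0 * pi / 2"
  proof (rule integral_bound_Cauchy_kernel)
    show "continuous_on {x..K} h" unfolding h_def
      by (intro continuous_intros continuous_on_radial[OF cont_supp_continuous_on[OF f] xy(2)])
    fix u assume u: "u \<in> {x..K}"
    define r where "r = sqrt (u^2 + y^2)"
    have r: "0 < r" "u \<le> r" "y \<le> r" "r^2 = u^2 + y^2"
      unfolding r_def using sqrt_sum_squares_bounds[OF xy(2), of u] by auto
    have "\<bar>r^(p+q) * f r\<bar> \<le> A0" using A0[OF r(1)] r(1) by (simp add: powr_realpow flip: of_nat_add)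
    then show "\<bar>h u\<bar> \<le> A0 * (y / (u^2 + y^2))"
      using monomial_Cauchy_kernel_bound[of u y r p q "f r" A0] r u xy pq
      unfolding h_def r_def by simp
  qed (use xy K A0[of 1] in auto)
  then have "real p * \<bar>y^q * integral {x..K} (\<lambda>u. f (sqrt (u^2 + y^2)) * u ^ (p - 1))\<bar>
      \<le> real p * (A0 * pi / 2)"
    unfolding h_def by (intro mult_left_mono) auto
  then show ?thesis using integral_radial_tail_eq[OF f xy K(2) pq(1)] by (simp add: abs_mult)
qed

text \<open>Integration by parts in u against this potential trades the profile f for its tail integral.\<close>

definition Psi :: "real \<Rightarrow> (real \<Rightarrow> real) \<Rightarrow> nat \<Rightarrow> nat \<Rightarrow> real \<Rightarrow> real \<Rightarrow> real" where
  "Psi c f p N u y = tail_int c f (sqrt (u^2 + y^2)) * u^p / sqrt (u^2 + y^2) ^ N"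

definition dPsi :: "real \<Rightarrow> (real \<Rightarrow> real) \<Rightarrow> nat \<Rightarrow> nat \<Rightarrow> real \<Rightarrow> real \<Rightarrow> real" where
  "dPsi c f p N u y = (let r = sqrt (u^2 + y^2) in
     - (f r * r powr (c - 1)) * u^(p+1) / r^(N+1)
     + tail_int c f r * (real p * u^(p-1) / r^N - real N * u^(p+1) / r^(N+2)))"

lemma has_real_derivative_Psi:
  assumes f: "cont_supp R f" and y: "0 < y" and p: "1 \<le> p" and N: "1 \<le> N"
  shows "((\<lambda>u. Psi c f p N u y) has_real_derivative dPsi c f p N u y) (at u)"
proof -
  define r where "r = sqrt (u^2 + y^2)"
  have r: "0 < r" unfolding r_def using sqrt_sum_squares_bounds(1)[OF y] .
  have dr: "((\<lambda>u. sqrt (u^2 + y^2)) has_real_derivative u / r) (at u)"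
  proof -
    have "((\<lambda>u. sqrt (u^2 + y^2)) has_real_derivative inverse r / 2 * (2 * u)) (at u)"
      unfolding r_def
      by (rule DERIV_chain2[OF DERIV_real_sqrt]) (use y in \<open>auto intro!: derivative_eq_intros add_nonneg_pos\<close>)
    then show ?thesis by (simp add: field_simps)
  qed
  have dJr: "((\<lambda>u. tail_int c f (sqrt (u^2 + y^2))) has_real_derivative
      (- (f r * r powr (c - 1))) * (u / r)) (at u)"
    using has_real_derivative_tail_int[OF f r] dr unfolding r_def by (rule DERIV_chain2)
  obtain P where P: "p = Suc P" using p by (cases p) auto
  obtain M where M: "N = Suc M" using N by (cases N) auto
  have "((\<lambda>u. Psi c f p N u y) has_real_derivative
     (((- (f r * r powr (c - 1))) * (u / r) * u ^ p + real p * (1 * u ^ (p - Suc 0)) * tail_int c f r) * r ^ N -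
       tail_int c f r * u ^ p * (real N * (u / r * r ^ (N - Suc 0)))) / (r ^ N * r ^ N)) (at u)"
    unfolding Psi_def
    apply (rule dJr dr derivative_eq_intros refl)+
    using r by (auto simp: r_def)
  moreover have "(((- (f r * r powr (c - 1))) * (u / r) * u ^ p + real p * (1 * u ^ (p - Suc 0)) * tail_int c f r) * r ^ N -
       tail_int c f r * u ^ p * (real N * (u / r * r ^ (N - Suc 0)))) / (r ^ N * r ^ N) = dPsi c f p N u y"
    unfolding dPsi_def Let_def r_def[symmetric] using r P M by (simp add: field_simps)
  ultimately show ?thesis by simp
qed

lemma Psi_vanishes:
  assumes f: "cont_supp R f" and "R < \<bar>u\<bar>"
  shows "Psi c f p N u y = 0"
  unfolding Psi_def using tail_int_vanishes[OF f less_sqrt_sum_squares] assms(2) by simp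

lemma has_integral_dPsi:
  assumes f: "cont_supp R f" and "0 < y" "x \<le> K" "R < K" "1 \<le> p" "1 \<le> N"
  shows "((\<lambda>u. dPsi c f p N u y) has_integral - Psi c f p N x y) {x..K}"
proof -
  have "((\<lambda>u. dPsi c f p N u y) has_integral Psi c f p N K y - Psi c f p N x y) {x..K}"
    using assms has_real_derivative_Psi[OF f]
    by (intro fundamental_theorem_of_calculus)
       (auto simp: has_real_derivative_iff_has_vector_derivative[symmetric]
             intro: has_field_derivative_at_within)
  moreover have "Psi c f p N K y = 0" using Psi_vanishes[OF f] assms(4) by simp
  ultimately show ?thesis by simp
qed

lemma continuous_on_dPsi:
  assumes f: "cont_supp R f" and S: "\<And>z. z \<in> S \<Longrightarrow> 0 < snd z"
  shows "continuous_on S (\<lambda>z. dPsi c f p N (fst z) (snd z))"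
proof -
  have pos: "0 < sqrt (fst z^2 + snd z^2)" if "z \<in> S" for z
    using sqrt_sum_squares_bounds(1)[OF S[OF that]] .
  show ?thesis unfolding dPsi_def Let_def
    by (intro continuous_intros continuous_on_radial2[OF cont_supp_continuous_on[OF f] S]
        continuous_on_radial2[OF continuous_on_tail_int[OF f] S])
       (use pos in \<open>fastforce+\<close>)
qed

lemma integral_Psi_bound:
  assumes f: "cont_supp R f" and pq: "1 \<le> p" "1 \<le> q" and xy: "0 < x" "0 < y" "x \<le> K"
    and A1: "\<And>z. 0 < z \<Longrightarrow> \<bar>tail_int c f z\<bar> \<le> A1"
  shows "\<bar>integral {x..K} (\<lambda>v. Psi c f p (p+q) y v * v^(q-1))\<bar> \<le> A1 * pi / 2"
proof (rule integral_bound_Cauchy_kernel)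
  have "continuous_on {x..K} (\<lambda>v. tail_int c f (sqrt (y^2 + v^2)))"
    by (rule continuous_on_compose2[OF continuous_on_tail_int[OF f]])
       (use xy in \<open>auto intro!: continuous_intros simp: add_pos_nonneg\<close>)
  then show "continuous_on {x..K} (\<lambda>v. Psi c f p (p+q) y v * v^(q-1))"
    unfolding Psi_def by (intro continuous_intros) (use xy in \<open>auto simp: add_pos_nonneg\<close>)
  fix v assume v: "v \<in> {x..K}"
  define r where "r = sqrt (y^2 + v^2)"
  have r: "0 < r" "y \<le> r" "v \<le> r" "r^2 = v^2 + y^2"
    unfolding r_def using sqrt_sum_squares_bounds[of v y] v xy by (auto simp: add.commute)
  have "\<bar>r^(q+p) * (tail_int c f r / r^(p+q))\<bar> \<le> A1"
    using A1[OF r(1)] r(1) by (simp add: add.commute)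
  then have "\<bar>y^p * (tail_int c f r / r^(p+q) * v^(q-1))\<bar> \<le> A1 * (y / r^2)"
    by (intro monomial_Cauchy_kernel_bound) (use r v xy pq in auto)
  then show "\<bar>Psi c f p (p+q) y v * v^(q-1)\<bar> \<le> A1 * (y / (v^2 + y^2))"
    unfolding Psi_def r_def[symmetric] using r(4) by (simp add: mult_ac)
qed (use xy A1[of 1] in auto)

lemma dPsi_diag_identity:
  fixes u y :: real
  assumes y: "0 < y" and p: "1 \<le> p"
  defines "r \<equiv> sqrt (u^2 + y^2)"
  shows "f r * u^(p-1) = - dPsi (real p) f p p u y + f r * u^(p-1) * y^2 / r^2
           + real p * tail_int (real p) f r * u^(p-1) * y^2 / (r^p * r^2)"
proof -
  have r: "0 < r" "y^2 = r^2 - u^2" unfolding r_def using sqrt_sum_squares_bounds[OF y, of u] by auto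
  obtain m where m: "p = Suc m" using p by (cases p) auto
  have "r powr (real p - 1) = r^m" using r(1) m by (simp add: powr_realpow)
  then show ?thesis unfolding dPsi_def Let_def r_def[symmetric] unfolding r(2) m
    using r(1) by (simp add: field_simps power2_eq_square)
qed

text \<open>The two dPsi terms of dPsi_divergence_identity after unfolding, with the monomials u^(p-1),
  v^(q-1), r^(p+q-1) abstracted to U, W, Q so that field_simps does not expand the powers.\<close>

lemma divergence_identity_algebra:
  fixes u v r F J U W Q :: real
  assumes "0 < r" "0 < Q" "r * r = u * u + v * v"
  shows "W * (- (F * Q) * (u * (u * U)) / (r * (r * Q)) + J * ((1 + real P) * U / (r * Q)
           - (2 + real P + real Qq) * (u * (u * U)) / (r * (r * (r * Q)))))
       + U * (- (F * Q) * (v * (v * W)) / (r * (r * Q)) + J * ((1 + real Qq) * W / (r * Q)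
           - (2 + real P + real Qq) * (v * (v * W)) / (r * (r * (r * Q)))))
       = - (F * U * W)"
proof -
  have e: "u * u = r * r - v * v" using assms(3) by simp
  show ?thesis using assms(1,2) by (simp add: field_simps e)
qed

text \<open>The integrand of the double integral in R^{a,b} is minus a divergence, so that integral reduces
  to one-dimensional integrals of the potentials Psi.\<close>

lemma dPsi_divergence_identity:
  fixes u v :: real
  assumes v: "0 < v" and pq: "1 \<le> p" "1 \<le> q"
  defines "r \<equiv> sqrt (u^2 + v^2)"
  shows "f r * u^(p-1) * v^(q-1)
    = - (dPsi (real (p+q)) f p (p+q) u v * v^(q-1) + dPsi (real (p+q)) f q (p+q) v u * u^(p-1))"
proof -
  have r: "0 < r" "r * r = u * u + v * v"
    unfolding r_def using sqrt_sum_squares_bounds[OF v, of u] by (auto simp: power2_eq_square)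
  have rv: "sqrt (v^2 + u^2) = r" unfolding r_def by (simp add: add.commute)
  obtain P where P: "p = Suc P" using pq by (cases p) auto
  obtain Q where Q: "q = Suc Q" using pq by (cases q) auto
  have "real (p+q) - 1 = real (P+Q+1)" using P Q by simp
  then have rpowr: "r powr (real (p+q) - 1) = r^(P+Q+1)" using r(1) by (simp only: powr_realpow)
  show ?thesis
    unfolding dPsi_def Let_def r_def[symmetric] rv rpowr
    using divergence_identity_algebra[where r=r and Q="r^(P+Q+1)" and u=u and v=v and F="f r"
        and J="tail_int (real (p+q)) f r" and U="u^P" and W="v^Q" and P=P and Qq=Q] r P Q
    by (simp add: algebra_simps)
qed

lemma integral_radial_tail_by_parts:
  assumes f: "cont_supp R f" and p: "1 \<le> p" and xy: "0 < x" "0 < y" and K: "x \<le> K" "R < K"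
  shows "integral {x..} (\<lambda>u. f (sqrt (u^2 + y^2)) * u powr (real p - 1))
    = Psi (real p) f p p x y
      + integral {x..K} (\<lambda>u. f (sqrt (u^2 + y^2)) * u^(p-1) * y^2 / (u^2 + y^2))
      + integral {x..K} (\<lambda>u. real p * tail_int (real p) f (sqrt (u^2 + y^2)) * u^(p-1) * y^2
                                / (sqrt (u^2 + y^2) ^ p * (u^2 + y^2)))"
    (is "_ = _ + integral _ ?k1 + integral _ ?k2")
proof -
  have pos: "0 < u^2 + y^2" for u using xy(2) by (simp add: add_nonneg_pos)
  have sq: "sqrt (u^2 + y^2) ^ 2 = u^2 + y^2" for u by (simp add: add_nonneg_nonneg)
  have ck1: "continuous_on {x..K} ?k1"
    by (intro continuous_intros continuous_on_radial[OF cont_supp_continuous_on[OF f] xy(2)])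
       (use pos in \<open>auto simp: less_imp_neq[symmetric]\<close>)
  have ck2: "continuous_on {x..K} ?k2"
    by (intro continuous_intros continuous_on_radial[OF continuous_on_tail_int[OF f] xy(2)])
       (use pos in \<open>auto simp: less_imp_neq[symmetric]\<close>)
  have "((\<lambda>u. - dPsi (real p) f p p u y + ?k1 u + ?k2 u) has_integral
      (Psi (real p) f p p x y + integral {x..K} ?k1 + integral {x..K} ?k2)) {x..K}"
    using has_integral_neg[OF has_integral_dPsi[OF f xy(2) K p p]]
    by (intro has_integral_add integrable_integral integrable_continuous_real ck1 ck2) simp
  moreover have "- dPsi (real p) f p p u y + ?k1 u + ?k2 u = f (sqrt (u^2 + y^2)) * u^(p-1)" for u
    using dPsi_diag_identity[OF xy(2) p, of f u] unfolding sq by linarith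
  ultimately show ?thesis
    using integral_radial_tail_eq[OF f xy K(2) p] by (simp add: integral_unique)
qed

lemma abs_Psi_diag_le:
  assumes y: "0 < y" and A1: "\<And>z. 0 < z \<Longrightarrow> \<bar>tail_int c f z\<bar> \<le> A1"
  shows "\<bar>Psi c f p p x y\<bar> \<le> A1"
proof -
  define r where "r = sqrt (x^2 + y^2)"
  have r: "0 < r" "\<bar>x\<bar> \<le> r" unfolding r_def using sqrt_sum_squares_bounds[OF y] by auto
  have "\<bar>x\<bar>^p \<le> r^p" using r by (intro power_mono) auto
  then have "\<bar>x\<bar>^p / r^p \<le> 1" using r by simp
  then have "\<bar>tail_int c f r\<bar> * (\<bar>x\<bar>^p / r^p) \<le> A1 * 1"
    using A1[OF r(1)] r(1) by (intro mult_mono) auto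
  moreover have "\<bar>Psi c f p p x y\<bar> = \<bar>tail_int c f r\<bar> * (\<bar>x\<bar>^p / r^p)"
    unfolding Psi_def r_def[symmetric] using r by (simp add: abs_mult power_abs)
  ultimately show ?thesis by simp
qed

lemma tail_term_bound_unweighted:
  assumes f: "cont_supp R f" and p: "1 \<le> p" and xy: "0 < x" "0 < y"
    and A0: "\<And>z. 0 < z \<Longrightarrow> \<bar>z powr real p * f z\<bar> \<le> A0"
    and A1: "\<And>z. 0 < z \<Longrightarrow> \<bar>tail_int (real p) f z\<bar> \<le> A1"
  shows "\<bar>real p * integral {x..} (\<lambda>u. f (sqrt (u^2 + y^2)) * u powr (real p - 1))\<bar>
           \<le> real p * (A0 * pi / 2 + real p * A1 * pi / 2 + A1)"
proof -
  define K where "K = max x R + 1"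
  have K: "x \<le> K" "R < K" unfolding K_def by auto
  have r: "0 < r" "\<bar>u\<bar> \<le> r" "y \<le> r" "r^2 = u^2 + y^2" if "r = sqrt (u^2 + y^2)" for u r
    using that sqrt_sum_squares_bounds[OF xy(2)] by auto
  have "\<bar>integral {x..K} (\<lambda>u. f (sqrt (u^2 + y^2)) * u^(p-1) * y^2 / (u^2 + y^2))\<bar> \<le> A0 * pi / 2"
  proof (rule integral_bound_Cauchy_kernel)
    fix u assume u: "u \<in> {x..K}"
    define r where "r = sqrt (u^2 + y^2)"
    note r = r[OF r_def]
    have "r ^ (p + 2) * (f r / r^2) = r ^ p * f r"
      using r(1) by (simp add: power_add field_simps power2_eq_square)
    then have "\<bar>r ^ (p + 2) * (f r / r^2)\<bar> \<le> A0" using A0[OF r(1)] r by (simp add: powr_realpow)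
    then have "\<bar>y^2 * (f r / r^2 * u^(p-1))\<bar> \<le> A0 * (y / r^2)"
      by (intro monomial_Cauchy_kernel_bound) (use u xy r p in auto)
    then show "\<bar>f (sqrt (u^2 + y^2)) * u^(p-1) * y^2 / (u^2 + y^2)\<bar> \<le> A0 * (y / (u^2 + y^2))"
      unfolding r_def[symmetric] unfolding r(4)[symmetric] by (simp add: mult_ac)
  qed (use xy K A0[of 1] in \<open>auto intro!: continuous_intros
        continuous_on_radial[OF cont_supp_continuous_on[OF f]] simp: add_nonneg_pos less_imp_neq[symmetric]\<close>)
  moreover have "\<bar>integral {x..K} (\<lambda>u. real p * tail_int (real p) f (sqrt (u^2 + y^2)) * u^(p-1) * y^2
      / (sqrt (u^2 + y^2) ^ p * (u^2 + y^2)))\<bar> \<le> (real p * A1) * pi / 2"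
  proof (rule integral_bound_Cauchy_kernel)
    fix u assume u: "u \<in> {x..K}"
    define r where "r = sqrt (u^2 + y^2)"
    note r = r[OF r_def]
    have "r ^ (p + 2) * (tail_int (real p) f r / (r^p * r^2)) = tail_int (real p) f r"
      using r(1) by (simp add: power_add field_simps power2_eq_square)
    then have "\<bar>r ^ (p + 2) * (tail_int (real p) f r / (r^p * r^2))\<bar> \<le> A1" using A1[OF r(1)] by simp
    then have "\<bar>y^2 * (tail_int (real p) f r / (r^p * r^2) * u^(p-1))\<bar> \<le> A1 * (y / r^2)"
      by (intro monomial_Cauchy_kernel_bound) (use u xy r p in auto)
    then have "real p * \<bar>y^2 * (tail_int (real p) f r / (r^p * r^2) * u^(p-1))\<bar> \<le> real p * (A1 * (y / r^2))"
      by (rule mult_left_mono) simp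
    then show "\<bar>real p * tail_int (real p) f (sqrt (u^2 + y^2)) * u^(p-1) * y^2
        / (sqrt (u^2 + y^2) ^ p * (u^2 + y^2))\<bar> \<le> (real p * A1) * (y / (u^2 + y^2))"
      unfolding r_def[symmetric] unfolding r(4)[symmetric] by (simp add: abs_mult mult_ac)
  qed (use xy K A1[of 1] in \<open>auto intro!: continuous_intros
        continuous_on_radial[OF continuous_on_tail_int[OF f]] simp: add_nonneg_pos less_imp_neq[symmetric]\<close>)
  moreover have "\<bar>Psi (real p) f p p x y\<bar> \<le> A1" by (rule abs_Psi_diag_le[OF xy(2) A1])
  ultimately have "\<bar>integral {x..} (\<lambda>u. f (sqrt (u^2 + y^2)) * u powr (real p - 1))\<bar>
      \<le> A0 * pi / 2 + real p * A1 * pi / 2 + A1"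
    unfolding integral_radial_tail_by_parts[OF f p xy K] by linarith
  then show ?thesis by (simp add: abs_mult mult_left_mono)
qed

lemma has_integral_radial_quadrant:
  assumes f: "cont_supp R f" and st: "0 < s" "0 < t" and K: "R < K"
  shows "((\<lambda>(u,v). f (sqrt (u^2+v^2)) * u powr e1 * v powr e2) has_integral
      integral (cbox (s,t) (K,K)) (\<lambda>(u,v). f (sqrt (u^2+v^2)) * u powr e1 * v powr e2)) ({s..} \<times> {t..})"
proof (rule has_integral_quadrant_vanishing)
  have pos: "0 < fst z \<and> 0 < snd z" if "z \<in> cbox (s,t) (K,K)" for z
    using that st by (auto simp: cbox_Pair_eq)
  show "continuous_on (cbox (s,t) (K,K)) (\<lambda>(u,v). f (sqrt (u^2+v^2)) * u powr e1 * v powr e2)"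
    unfolding split_beta
    by (intro continuous_intros continuous_on_radial2[OF cont_supp_continuous_on[OF f]])
       (use pos in fastforce)+
  fix u v :: real assume "u > K \<or> v > K"
  then have "R < sqrt (u^2+v^2)" using K by (intro less_sqrt_sum_squares) auto
  then show "(\<lambda>(u,v). f (sqrt (u^2+v^2)) * u powr e1 * v powr e2) (u,v) = 0"
    using cont_supp_vanishes[OF f] by simp
qed

lemma integral_radial_quadrant_eq:
  assumes f: "cont_supp R f" and st: "0 < s" "0 < t" and K: "R < K" and pq: "1 \<le> p" "1 \<le> q"
  shows "integral ({s..} \<times> {t..}) (\<lambda>(u,v). f (sqrt (u^2+v^2)) * u powr (real p - 1) * v powr (real q - 1))
       = integral (cbox (s,t) (K,K)) (\<lambda>(u,v). f (sqrt (u^2+v^2)) * u^(p-1) * v^(q-1))"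
proof -
  have pm: "real p - 1 = real (p-1)" "real q - 1 = real (q-1)" using pq by auto
  have "integral (cbox (s,t) (K,K)) (\<lambda>(u,v). f (sqrt (u^2+v^2)) * u powr (real p - 1) * v powr (real q - 1))
      = integral (cbox (s,t) (K,K)) (\<lambda>(u,v). f (sqrt (u^2+v^2)) * u^(p-1) * v^(q-1))"
    by (rule integral_cong) (use st in \<open>auto simp: cbox_Pair_eq pm powr_realpow\<close>)
  then show ?thesis using integral_unique[OF has_integral_radial_quadrant[OF f st K]] by simp
qed

lemma has_integral_box_dPsi:
  assumes f: "cont_supp R f" and pN: "1 \<le> p" "1 \<le> N" and st: "0 < s" "0 < t"
    and K: "s \<le> K" "R < K"
  shows "((\<lambda>(u,v). dPsi c f p N u v * v^m) has_integral
      - integral {t..K} (\<lambda>v. Psi c f p N s v * v^m)) (cbox (s,t) (K,K))"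
proof -
  have c: "continuous_on (cbox (s,t) (K,K)) (\<lambda>(u,v). dPsi c f p N u v * v^m)"
    unfolding split_beta
    by (intro continuous_intros continuous_on_dPsi[OF f]) (use st in \<open>auto simp: cbox_Pair_eq\<close>)
  have "integral (cbox (s,t) (K,K)) (\<lambda>(u,v). dPsi c f p N u v * v^m)
      = integral {t..K} (\<lambda>v. integral {s..K} (\<lambda>u. dPsi c f p N u v * v^m))"
    using integral_prod_continuous[OF c] integral_swap_continuous[of s t K K "\<lambda>u v. dPsi c f p N u v * v^m"] c
    by simp
  also have "\<dots> = integral {t..K} (\<lambda>v. - Psi c f p N s v * v^m)"
    using has_integral_mult_left[OF has_integral_dPsi[OF f _ K pN]] st
    by (intro integral_cong integral_unique) auto
  finally show ?thesis using integrable_continuous[OF c] by (simp add: has_integral_iff)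
qed

lemma has_integral_box_dPsi_swap:
  assumes f: "cont_supp R f" and pN: "1 \<le> p" "1 \<le> N" and st: "0 < s" "0 < t"
    and K: "t \<le> K" "R < K"
  shows "((\<lambda>(u,v). dPsi c f p N v u * u^m) has_integral
      - integral {s..K} (\<lambda>u. Psi c f p N t u * u^m)) (cbox (s,t) (K,K))"
proof -
  have "continuous_on (cbox (s,t) (K,K)) (\<lambda>z. (\<lambda>z. dPsi c f p N (fst z) (snd z)) (snd z, fst z))"
    by (rule continuous_on_compose2[OF continuous_on_dPsi[OF f, of "{z. 0 < snd z}"]])
       (use st in \<open>auto simp: cbox_Pair_eq intro!: continuous_intros\<close>)
  then have c: "continuous_on (cbox (s,t) (K,K)) (\<lambda>(u,v). dPsi c f p N v u * u^m)"
    unfolding split_beta by (intro continuous_intros) simp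
  have "integral (cbox (s,t) (K,K)) (\<lambda>(u,v). dPsi c f p N v u * u^m)
      = integral {s..K} (\<lambda>u. integral {t..K} (\<lambda>v. dPsi c f p N v u * u^m))"
    using integral_prod_continuous[OF c] by simp
  also have "\<dots> = integral {s..K} (\<lambda>u. - Psi c f p N t u * u^m)"
    using has_integral_mult_left[OF has_integral_dPsi[OF f _ K pN]] st
    by (intro integral_cong integral_unique) auto
  finally show ?thesis using integrable_continuous[OF c] by (simp add: has_integral_iff)
qed

lemma double_tail_term_bound:
  assumes f: "cont_supp R f" and pq: "1 \<le> p" "1 \<le> q" and st: "0 < s" "0 < t"
    and A1: "\<And>z. 0 < z \<Longrightarrow> \<bar>tail_int (real (p+q)) f z\<bar> \<le> A1"
  shows "\<bar>real p * real q * integral ({s..} \<times> {t..})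
            (\<lambda>(u,v). f (sqrt (u^2+v^2)) * u powr (real p - 1) * v powr (real q - 1))\<bar>
         \<le> real p * real q * (A1 * pi)"
proof -
  define c where "c = real (p+q)"
  define K where "K = max (max s t) R + 1"
  have K: "s \<le> K" "t \<le> K" "R < K" unfolding K_def by auto
  have "((\<lambda>z. - ((\<lambda>(u,v). dPsi c f p (p+q) u v * v^(q-1)) z + (\<lambda>(u,v). dPsi c f q (q+p) v u * u^(p-1)) z))
      has_integral (integral {t..K} (\<lambda>v. Psi c f p (p+q) s v * v^(q-1))
        + integral {s..K} (\<lambda>u. Psi c f q (q+p) t u * u^(p-1)))) (cbox (s,t) (K,K))"
    using has_integral_neg[OF has_integral_add[
        OF has_integral_box_dPsi[OF f pq(1) _ st K(1,3), where N="p+q" and c=c and m="q-1"]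
           has_integral_box_dPsi_swap[OF f pq(2) _ st K(2,3), where N="q+p" and c=c and m="p-1"]]]
      pq by (simp add: add.commute)
  moreover have "- (dPsi c f p (p+q) u v * v^(q-1) + dPsi c f q (q+p) v u * u^(p-1))
      = f (sqrt (u^2+v^2)) * u^(p-1) * v^(q-1)" if "(u,v) \<in> cbox (s,t) (K,K)" for u v
    using dPsi_divergence_identity[OF _ pq, of v f u] that st by (auto simp: c_def add.commute cbox_Pair_eq)
  ultimately have "integral (cbox (s,t) (K,K)) (\<lambda>(u,v). f (sqrt (u^2+v^2)) * u^(p-1) * v^(q-1))
      = integral {t..K} (\<lambda>v. Psi c f p (p+q) s v * v^(q-1))
        + integral {s..K} (\<lambda>u. Psi c f q (q+p) t u * u^(p-1))"
    by (intro integral_unique) (auto elim!: has_integral_eq[rotated])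
  moreover have A1': "\<And>z. 0 < z \<Longrightarrow> \<bar>tail_int c f z\<bar> \<le> A1" using A1 unfolding c_def .
  note integral_Psi_bound[OF f pq st(2,1) K(2) A1'] integral_Psi_bound[OF f pq(2,1) st K(1) A1']
  ultimately have "\<bar>integral ({s..} \<times> {t..})
      (\<lambda>(u,v). f (sqrt (u^2+v^2)) * u powr (real p - 1) * v powr (real q - 1))\<bar> \<le> A1 * pi"
    unfolding integral_radial_quadrant_eq[OF f st K(3) pq] by linarith
  then show ?thesis by (simp add: abs_mult mult_left_mono)
qed

lemma Rop_second_term_bound:
  assumes f: "cont_supp R f" and st: "0 < s" "0 < t"
    and A0: "\<And>z. 0 < z \<Longrightarrow> \<bar>z powr real (a+b) * f z\<bar> \<le> A0"
    and A1: "\<And>z. 0 < z \<Longrightarrow> \<bar>tail_int (real (a+b)) f z\<bar> \<le> A1"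
  shows "\<bar>real a * t^b * integral {s..} (\<lambda>u. f (sqrt (u^2 + t^2)) * u powr (real a - 1))\<bar>
           \<le> real a * (2 * A0 + (2 * real a + 1) * A1)"
proof -
  have A0_nonneg: "0 \<le> A0" using A0[of 1] by linarith
  have A1_nonneg: "0 \<le> A1" using A1[of 1] by linarith
  have "A0 * pi \<le> A0 * 4" using pi_less_4 A0_nonneg by (intro mult_left_mono) auto
  moreover have "real a * A1 * pi \<le> real a * A1 * 4" using pi_less_4 A1_nonneg by (intro mult_left_mono) auto
  ultimately have pi_bounds: "A0 * pi / 2 \<le> 2 * A0" "real a * A1 * pi / 2 \<le> 2 * real a * A1" by auto
  consider "a = 0" | "1 \<le> a" "b = 0" | "1 \<le> a" "1 \<le> b" by linarith
  then show ?thesis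
  proof cases
    case 1
    then show ?thesis by simp
  next
    case 2
    have "\<bar>real a * t^b * integral {s..} (\<lambda>u. f (sqrt (u^2 + t^2)) * u powr (real a - 1))\<bar>
        \<le> real a * (A0 * pi / 2 + real a * A1 * pi / 2 + A1)"
      using tail_term_bound_unweighted[OF f 2(1) st, of A0 A1] A0 A1 2(2) by simp
    also have "\<dots> \<le> real a * (2 * A0 + (2 * real a + 1) * A1)"
      using pi_bounds by (intro mult_left_mono) (simp_all add: algebra_simps)
    finally show ?thesis .
  next
    case 3
    have "\<bar>real a * t^b * integral {s..} (\<lambda>u. f (sqrt (u^2 + t^2)) * u powr (real a - 1))\<bar>
        \<le> real a * A0 * pi / 2"
      by (rule tail_term_bound[OF f 3 st A0])
    also have "\<dots> = real a * (A0 * pi / 2)" by simp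
    also have "\<dots> \<le> real a * (2 * A0 + (2 * real a + 1) * A1)"
    proof (rule mult_left_mono)
      have "0 \<le> (2 * real a + 1) * A1" using A1_nonneg by simp
      then show "A0 * pi / 2 \<le> 2 * A0 + (2 * real a + 1) * A1" using pi_bounds(1) by linarith
    qed simp
    finally show ?thesis .
  qed
qed

lemma Rop_double_term_bound:
  assumes f: "cont_supp R f" and st: "0 < s" "0 < t"
    and A1: "\<And>z. 0 < z \<Longrightarrow> \<bar>tail_int (real (a+b)) f z\<bar> \<le> A1"
  shows "\<bar>real a * real b * integral ({s..} \<times> {t..})
            (\<lambda>(u, v). f (sqrt (u\<^sup>2 + v\<^sup>2)) * u powr (real a - 1) * v powr (real b - 1))\<bar>
         \<le> 4 * real a * real b * A1"
proof (cases "a = 0 \<or> b = 0")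
  case False
  then have ab: "1 \<le> a" "1 \<le> b" by auto
  have "real a * real b * (A1 * pi) \<le> real a * real b * (A1 * 4)"
    using pi_less_4 A1[of 1] by (intro mult_left_mono) auto
  then show ?thesis using double_tail_term_bound[OF f ab st A1] by simp
qed auto

lemma Rop_bound:
  assumes f: "cont_supp R f" and st: "0 < s" "0 < t"
    and A0: "\<And>z. 0 < z \<Longrightarrow> \<bar>z powr real (a+b) * f z\<bar> \<le> A0"
    and A1: "\<And>z. 0 < z \<Longrightarrow> \<bar>tail_int (real (a+b)) f z\<bar> \<le> A1"
  shows "\<bar>Rop a b f s t\<bar> \<le> (1 + 2 * real (a + b))^2 * (A0 + A1)"
proof -
  have A0_nonneg: "0 \<le> A0" using A0[of 1] by linarith
  have A1_nonneg: "0 \<le> A1" using A1[of 1] by linarith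
  have T3: "\<bar>real b * s^a * integral {t..} (\<lambda>v. f (sqrt (s^2 + v^2)) * v powr (real b - 1))\<bar>
      \<le> real b * (2 * A0 + (2 * real b + 1) * A1)"
    using Rop_second_term_bound[OF f st(2,1), of b a A0 A1] A0 A1 by (simp add: add.commute)
  have "\<bar>Rop a b f s t\<bar> \<le> A0 + real a * (2 * A0 + (2 * real a + 1) * A1)
      + real b * (2 * A0 + (2 * real b + 1) * A1) + 4 * real a * real b * A1"
    unfolding Rop_def
    using Rop_first_term_bound[OF st A0] Rop_second_term_bound[OF f st A0 A1] T3
      Rop_double_term_bound[OF f st A1]
    by linarith
  also have "\<dots> = (1 + 2 * real (a + b)) * A0 + (2 * real a ^ 2 + real a + 2 * real b ^ 2 + real b
      + 4 * real a * real b) * A1"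
    by (simp add: algebra_simps power2_eq_square)
  also have "\<dots> \<le> (1 + 2 * real (a + b))^2 * A0 + (1 + 2 * real (a + b))^2 * A1"
  proof (intro add_mono mult_right_mono A0_nonneg A1_nonneg)
    show "1 + 2 * real (a + b) \<le> (1 + 2 * real (a + b))^2"
      by (simp add: power2_eq_square algebra_simps)
    show "2 * real a ^ 2 + real a + 2 * real b ^ 2 + real b + 4 * real a * real b
        \<le> (1 + 2 * real (a + b))^2"
      by (simp add: power2_eq_square algebra_simps)
  qed
  finally show ?thesis by (simp add: distrib_left)
qed

section \<open>Linearity, and extension for profiles continuous at 0\<close>

lemma integrable_radial_tail:
  assumes "cont_supp R f" "0 < x" "0 < y"
  shows "(\<lambda>u. f (sqrt (u^2 + y^2)) * u powr e) integrable_on {x..}"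
  using has_integral_radial_tail[OF assms less_add_one] by blast

lemma integrable_radial_quadrant:
  assumes "cont_supp R f" "0 < s" "0 < t"
  shows "(\<lambda>(u,v). f (sqrt (u^2+v^2)) * u powr e1 * v powr e2) integrable_on ({s..} \<times> {t..})"
  using has_integral_radial_quadrant[OF assms less_add_one] by blast

lemma Rop_diff:
  assumes f: "cont_supp R f" and g: "cont_supp R g" and st: "0 < s" "0 < t"
  shows "Rop a b (\<lambda>x. f x - g x) s t = Rop a b f s t - Rop a b g s t"
proof -
  have i1: "integral {s..} (\<lambda>u. (f (sqrt (u\<^sup>2 + t\<^sup>2)) - g (sqrt (u\<^sup>2 + t\<^sup>2))) * u powr e)
     = integral {s..} (\<lambda>u. f (sqrt (u\<^sup>2 + t\<^sup>2)) * u powr e)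
     - integral {s..} (\<lambda>u. g (sqrt (u\<^sup>2 + t\<^sup>2)) * u powr e)" for e
    using integral_diff[OF integrable_radial_tail[OF f st] integrable_radial_tail[OF g st]]
    by (simp add: left_diff_distrib)
  have i2: "integral {t..} (\<lambda>v. (f (sqrt (s\<^sup>2 + v\<^sup>2)) - g (sqrt (s\<^sup>2 + v\<^sup>2))) * v powr e)
     = integral {t..} (\<lambda>v. f (sqrt (s\<^sup>2 + v\<^sup>2)) * v powr e)
     - integral {t..} (\<lambda>v. g (sqrt (s\<^sup>2 + v\<^sup>2)) * v powr e)" for e
    using integral_diff[OF integrable_radial_tail[OF f st(2,1)] integrable_radial_tail[OF g st(2,1)]]
    by (simp add: left_diff_distrib add.commute)
  have i3: "integral ({s..} \<times> {t..}) (\<lambda>(u,v). (f (sqrt (u^2+v^2)) - g (sqrt (u^2+v^2))) * u powr e1 * v powr e2)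
     = integral ({s..} \<times> {t..}) (\<lambda>(u,v). f (sqrt (u^2+v^2)) * u powr e1 * v powr e2)
     - integral ({s..} \<times> {t..}) (\<lambda>(u,v). g (sqrt (u^2+v^2)) * u powr e1 * v powr e2)" for e1 e2
  proof -
    have "(\<lambda>(u,v). (f (sqrt (u^2+v^2)) - g (sqrt (u^2+v^2))) * u powr e1 * v powr e2)
       = (\<lambda>z. (\<lambda>(u,v). f (sqrt (u^2+v^2)) * u powr e1 * v powr e2) z
            - (\<lambda>(u,v). g (sqrt (u^2+v^2)) * u powr e1 * v powr e2) z)"
      by (auto simp: fun_eq_iff algebra_simps)
    then show ?thesis
      using integral_diff[OF integrable_radial_quadrant[OF f st] integrable_radial_quadrant[OF g st]]
      by simp
  qed
  show ?thesis unfolding Rop_def i1 i2 i3 by (simp add: algebra_simps)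
qed

lemma Rop_vanishes:
  assumes f: "cont_supp R f" and st: "0 < s" "0 < t" and big: "R < sqrt (s^2 + t^2)"
  shows "Rop a b f s t = 0"
proof -
  have fz: "f (sqrt (u^2 + v^2)) = 0" if "s \<le> u" "t \<le> v" for u v
  proof -
    have "s^2 + t^2 \<le> u^2 + v^2" using that st by (intro add_mono power_mono) auto
    then have "sqrt (s^2 + t^2) \<le> sqrt (u^2 + v^2)" by (rule real_sqrt_le_mono)
    then show ?thesis using big by (intro cont_supp_vanishes[OF f]) linarith
  qed
  have "integral {s..} (\<lambda>u. f (sqrt (u\<^sup>2 + t\<^sup>2)) * u powr (real a - 1)) = integral {s..} (\<lambda>u. 0)"
    by (rule integral_cong) (use fz in auto)
  moreover have "integral {t..} (\<lambda>v. f (sqrt (s\<^sup>2 + v\<^sup>2)) * v powr (real b - 1)) = integral {t..} (\<lambda>u. 0)"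
    by (rule integral_cong) (use fz in auto)
  moreover have "integral ({s..} \<times> {t..})
      (\<lambda>(u, v). f (sqrt (u\<^sup>2 + v\<^sup>2)) * u powr (real a - 1) * v powr (real b - 1))
      = integral ({s..} \<times> {t..}) (\<lambda>u. 0)"
    by (rule integral_cong) (use fz in auto)
  ultimately show ?thesis unfolding Rop_def using fz[of s t] by simp
qed

lemma tail_integral_continuous_param:
  fixes h :: "real \<times> real \<Rightarrow> real"
  assumes ch: "continuous_on Quad h" and K: "0 < K"
    and hz: "\<And>u t. K \<le> u \<Longrightarrow> 0 \<le> t \<Longrightarrow> h (u,t) = 0"
  obtains \<Phi> where "continuous_on Quad \<Phi>"
    and "\<And>s t. 0 \<le> s \<Longrightarrow> 0 \<le> t \<Longrightarrow> ((\<lambda>u. h (u,t)) has_integral \<Phi> (s,t)) {s..}"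
proof
  \<comment> \<open>For s \<le> K, the integral over [s, K] (h vanishes beyond K) is the integral over the fixed
    interval [0, K] of the jointly continuous h (max u s, t), minus the contribution s * h (s, t) of [0, s].\<close>
  define \<Phi> where "\<Phi> = (\<lambda>z. integral {0..K} (\<lambda>u. h (max u (fst z), snd z)) - fst z * h z)"
  have "continuous_on (Quad \<times> cbox 0 K) (\<lambda>x. h ((\<lambda>(z,u). (max u (fst z), snd z)) x))"
    by (rule continuous_on_compose2[OF ch]) (auto simp: split_beta Quad_def intro!: continuous_intros)
  then have "continuous_on Quad (\<lambda>z. integral (cbox 0 K) (\<lambda>u. h (max u (fst z), snd z)))"
    by (intro integral_continuous_on_param) (simp add: split_beta)
  then show "continuous_on Quad \<Phi>" unfolding \<Phi>_def by (auto intro!: continuous_intros ch)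
  fix s t :: real assume st: "0 \<le> s" "0 \<le> t"
  have cu: "continuous_on S (\<lambda>u. h (u, t))" if "S \<subseteq> {0..}" for S
    by (rule continuous_on_compose2[OF ch]) (use that st in \<open>auto simp: Quad_def intro!: continuous_intros\<close>)
  have cmax: "continuous_on {0..K} (\<lambda>u. h (max u s, t))"
    by (rule continuous_on_compose2[OF ch]) (use st in \<open>auto simp: Quad_def intro!: continuous_intros\<close>)
  show "((\<lambda>u. h (u,t)) has_integral \<Phi> (s,t)) {s..}"
  proof (cases "s \<le> K")
    case True
    have "integral {0..s} (\<lambda>u. h (max u s, t)) + integral {s..K} (\<lambda>u. h (max u s, t))
          = integral {0..K} (\<lambda>u. h (max u s, t))"
      by (rule Henstock_Kurzweil_Integration.integral_combine)
         (use True st integrable_continuous_real[OF cmax] in auto)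
    moreover have "integral {0..s} (\<lambda>u. h (max u s, t)) = integral {0..s} (\<lambda>u. h (s, t))"
      by (rule integral_cong) auto
    moreover have "integral {s..K} (\<lambda>u. h (max u s, t)) = integral {s..K} (\<lambda>u. h (u, t))"
      by (rule integral_cong) auto
    ultimately have "\<Phi> (s,t) = integral {s..K} (\<lambda>u. h (u, t))"
      using st by (simp add: \<Phi>_def)
    then show ?thesis
      by (simp only:) (rule has_integral_atLeast_vanishing[OF cu]; use st K hz in auto)
  next
    case False
    have hs: "h (s,t) = 0" using hz[of s t] False st by simp
    have "integral {0..K} (\<lambda>u. h (max u s, t)) = integral {0..K} (\<lambda>u. 0)"
      by (rule integral_cong) (use hs False in \<open>auto simp: max_def\<close>)
    then have "\<Phi> (s,t) = 0" using hs by (simp add: \<Phi>_def)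
    then show ?thesis
      by (simp only:) (rule has_integral_is_0; use hz False st in auto)
  qed
qed

lemma integral_quadrant_iterated:
  fixes F :: "real \<times> real \<Rightarrow> real"
  assumes cF: "continuous_on (cbox (s,t) (K,K)) F" and Fz: "\<And>u v. K < u \<or> K < v \<Longrightarrow> F (u,v) = 0"
  shows "integral ({s..} \<times> {t..}) F = integral {s..} (\<lambda>u. integral {t..} (\<lambda>v. F (u,v)))"
proof -
  define G where "G = (\<lambda>u. integral {t..K} (\<lambda>v. F (u,v)))"
  have cG: "continuous_on {s..K} G"
    using integral_continuous_on_param[of "{s..K}" t K "\<lambda>u v. F (u,v)"] cF
    unfolding G_def by (simp add: cbox_Pair_eq)
  have inner: "integral {t..} (\<lambda>v. F (u,v)) = G u" if "u \<in> {s..K}" for u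
  proof -
    have "continuous_on {t..K} (\<lambda>v. F (u,v))"
      by (rule continuous_on_compose2[OF cF]) (use that in \<open>auto simp: cbox_Pair_eq intro!: continuous_intros\<close>)
    then show ?thesis
      unfolding G_def using has_integral_atLeast_vanishing Fz by (blast intro: integral_unique)
  qed
  have "integral ({s..} \<times> {t..}) F = integral (cbox (s,t) (K,K)) F"
    using has_integral_quadrant_vanishing[OF cF] Fz by (blast intro: integral_unique)
  also have "\<dots> = integral {s..K} G"
    unfolding G_def using integral_prod_continuous[OF cF] by simp
  also have "\<dots> = integral {s..} G"
    using has_integral_atLeast_vanishing[OF cG] Fz by (auto simp: G_def intro!: integral_unique[symmetric])
  also have "\<dots> = integral {s..} (\<lambda>u. integral {t..} (\<lambda>v. F (u,v)))"
  proof (rule integral_cong)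
    fix u assume "u \<in> {s..}"
    show "G u = integral {t..} (\<lambda>v. F (u,v))"
    proof (cases "u \<le> K")
      case True
      then show ?thesis using inner \<open>u \<in> {s..}\<close> by simp
    next
      case False
      then show ?thesis using Fz by (simp add: G_def)
    qed
  qed
  finally show ?thesis .
qed

lemma Rop_eq_power_form:
  assumes st: "0 < s" "0 < t"
  shows "Rop a b g s t = t^b * s^a * g (sqrt (s^2 + t^2))
     + real a * t^b * integral {s..} (\<lambda>u. g (sqrt (u^2 + t^2)) * u^(a-1))
     + real b * s^a * integral {t..} (\<lambda>v. g (sqrt (v^2 + s^2)) * v^(b-1))
     + real a * real b * integral ({s..} \<times> {t..}) (\<lambda>(u,v). g (sqrt (u^2 + v^2)) * u^(a-1) * v^(b-1))"
proof -
  have pow: "u powr (real n - 1) = u^(n-1)" if "0 < u" "n \<noteq> 0" for u :: real and n :: nat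
  proof -
    have "real n - 1 = real (n - 1)" using that(2) by auto
    then show ?thesis using that(1) by (simp only: powr_realpow)
  qed
  have t2: "real a * t^b * integral {s..} (\<lambda>u. g (sqrt (u^2 + t^2)) * u powr (real a - 1))
      = real a * t^b * integral {s..} (\<lambda>u. g (sqrt (u^2 + t^2)) * u^(a-1))"
    by (cases "a = 0") (use st in \<open>auto intro!: integral_cong simp: pow\<close>)
  have t3: "real b * s^a * integral {t..} (\<lambda>v. g (sqrt (s^2 + v^2)) * v powr (real b - 1))
      = real b * s^a * integral {t..} (\<lambda>v. g (sqrt (v^2 + s^2)) * v^(b-1))"
    by (cases "b = 0") (use st in \<open>auto intro!: integral_cong simp: pow add.commute\<close>)
  have t4: "real a * real b * integral ({s..} \<times> {t..})
        (\<lambda>(u,v). g (sqrt (u^2 + v^2)) * u powr (real a - 1) * v powr (real b - 1))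
      = real a * real b * integral ({s..} \<times> {t..}) (\<lambda>(u,v). g (sqrt (u^2 + v^2)) * u^(a-1) * v^(b-1))"
    by (cases "a = 0 \<or> b = 0") (use st in \<open>auto intro!: integral_cong simp: pow\<close>)
  show ?thesis unfolding Rop_def t2 t3 t4 ..
qed

lemma radial_tail_extension:
  assumes cg: "continuous_on UNIV g" and gz: "\<And>r. R < r \<Longrightarrow> g r = 0"
  obtains \<Phi> where "continuous_on Quad \<Phi>"
    and "\<And>s t. 0 \<le> s \<Longrightarrow> 0 \<le> t \<Longrightarrow> ((\<lambda>u. g (sqrt (u^2 + t^2)) * u^m) has_integral \<Phi> (s,t)) {s..}"
proof -
  define K where "K = max R 0 + 1"
  have K: "0 < K" "R < K" unfolding K_def by auto
  define h where "h = (\<lambda>z::real \<times> real. g (sqrt (fst z^2 + snd z^2)) * fst z ^ m)"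
  have "continuous_on Quad h"
    unfolding h_def by (intro continuous_intros continuous_on_compose2[OF cg]) auto
  moreover have "h (u,t) = 0" if "K \<le> u" for u t
    unfolding h_def using that K by (simp add: gz less_sqrt_sum_squares)
  ultimately obtain \<Phi> where "continuous_on Quad \<Phi>"
    and "\<And>s t. 0 \<le> s \<Longrightarrow> 0 \<le> t \<Longrightarrow> ((\<lambda>u. h (u,t)) has_integral \<Phi> (s,t)) {s..}"
    using tail_integral_continuous_param[OF _ K(1)] by blast
  then show ?thesis using that unfolding h_def by simp
qed

lemma radial_quadrant_extension:
  assumes cg: "continuous_on UNIV g" and gz: "\<And>r. R < r \<Longrightarrow> g r = 0"
  obtains \<Phi> where "continuous_on Quad \<Phi>"
    and "\<And>s t. 0 < s \<Longrightarrow> 0 < t \<Longrightarrow>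
      \<Phi> (s,t) = integral ({s..} \<times> {t..}) (\<lambda>(u,v). g (sqrt (u^2 + v^2)) * u^m * v^n)"
proof -
  define K where "K = max R 0 + 1"
  have K: "0 < K" "R < K" unfolding K_def by auto
  have big: "g (sqrt (u^2 + v^2)) = 0" if "K \<le> u \<or> K \<le> v" for u v
    using that K by (intro gz less_sqrt_sum_squares) auto
  obtain \<Phi>2 where c\<Phi>2: "continuous_on Quad \<Phi>2"
    and \<Phi>2: "\<And>s t. 0 \<le> s \<Longrightarrow> 0 \<le> t \<Longrightarrow> ((\<lambda>v. g (sqrt (v^2 + t^2)) * v^n) has_integral \<Phi>2 (s,t)) {s..}"
    using radial_tail_extension[OF cg gz] by blast
  define h where "h = (\<lambda>z::real \<times> real. fst z ^ m * \<Phi>2 (snd z, fst z))"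
  have "continuous_on Quad h" unfolding h_def
    by (intro continuous_intros continuous_on_compose2[OF c\<Phi>2]) (auto simp: Quad_def)
  moreover have "h (u,t) = 0" if "K \<le> u" "0 \<le> t" for u t
  proof -
    have "((\<lambda>v. g (sqrt (v^2 + u^2)) * v^n) has_integral 0) {t..}"
      by (rule has_integral_is_0) (use big[of _ u] that in \<open>auto simp: add.commute\<close>)
    then show ?thesis using \<Phi>2[of t u] that K unfolding h_def by (auto dest: has_integral_unique)
  qed
  ultimately obtain \<Phi> where c\<Phi>: "continuous_on Quad \<Phi>"
    and \<Phi>: "\<And>s t. 0 \<le> s \<Longrightarrow> 0 \<le> t \<Longrightarrow> ((\<lambda>u. h (u,t)) has_integral \<Phi> (s,t)) {s..}"
    using tail_integral_continuous_param[OF _ K(1)] by blast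
  have "\<Phi> (s,t) = integral ({s..} \<times> {t..}) (\<lambda>(u,v). g (sqrt (u^2 + v^2)) * u^m * v^n)"
    if st: "0 < s" "0 < t" for s t
  proof -
    have "continuous_on (cbox (s,t) (K,K)) (\<lambda>(u,v). g (sqrt (u^2 + v^2)) * u^m * v^n)"
      unfolding split_beta by (intro continuous_intros continuous_on_compose2[OF cg]) auto
    moreover have "(\<lambda>(u,v). g (sqrt (u^2 + v^2)) * u^m * v^n) (u,v) = 0" if "K < u \<or> K < v" for u v
      using big that by auto
    ultimately have "integral ({s..} \<times> {t..}) (\<lambda>(u,v). g (sqrt (u^2 + v^2)) * u^m * v^n)
        = integral {s..} (\<lambda>u. integral {t..} (\<lambda>v. g (sqrt (u^2 + v^2)) * u^m * v^n))"
      by (subst integral_quadrant_iterated) auto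
    also have "\<dots> = integral {s..} (\<lambda>u. h (u,t))"
    proof (rule integral_cong)
      fix u assume "u \<in> {s..}"
      then have "((\<lambda>v. u^m * (g (sqrt (v^2 + u^2)) * v^n)) has_integral h (u,t)) {t..}"
        using has_integral_mult_right[OF \<Phi>2[of t u]] st unfolding h_def by simp
      then show "integral {t..} (\<lambda>v. g (sqrt (u^2 + v^2)) * u^m * v^n) = h (u,t)"
        by (simp add: integral_unique add.commute mult_ac)
    qed
    also have "\<dots> = \<Phi> (s,t)" using \<Phi>[of s t] st by (simp add: integral_unique)
    finally show ?thesis ..
  qed
  with c\<Phi> that show ?thesis by blast
qed

lemma Rop_continuous_extension:
  assumes cg: "continuous_on UNIV g" and gz: "\<And>r. R < r \<Longrightarrow> g r = 0"
  obtains E where "continuous_on Quad E" and "\<And>s t. 0 < s \<Longrightarrow> 0 < t \<Longrightarrow> E (s,t) = Rop a b g s t"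
proof -
  obtain \<Phi>1 where c\<Phi>1: "continuous_on Quad \<Phi>1"
    and \<Phi>1: "\<And>s t. 0 \<le> s \<Longrightarrow> 0 \<le> t \<Longrightarrow> ((\<lambda>u. g (sqrt (u^2 + t^2)) * u^(a-1)) has_integral \<Phi>1 (s,t)) {s..}"
    using radial_tail_extension[OF cg gz] by blast
  obtain \<Phi>2 where c\<Phi>2: "continuous_on Quad \<Phi>2"
    and \<Phi>2: "\<And>s t. 0 \<le> s \<Longrightarrow> 0 \<le> t \<Longrightarrow> ((\<lambda>v. g (sqrt (v^2 + t^2)) * v^(b-1)) has_integral \<Phi>2 (s,t)) {s..}"
    using radial_tail_extension[OF cg gz] by blast
  obtain \<Phi>3 where c\<Phi>3: "continuous_on Quad \<Phi>3"
    and \<Phi>3: "\<And>s t. 0 < s \<Longrightarrow> 0 < t \<Longrightarrow>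
      \<Phi>3 (s,t) = integral ({s..} \<times> {t..}) (\<lambda>(u,v). g (sqrt (u^2 + v^2)) * u^(a-1) * v^(b-1))"
    using radial_quadrant_extension[OF cg gz] by blast
  define E where "E = (\<lambda>z::real \<times> real. snd z ^ b * fst z ^ a * g (sqrt (fst z^2 + snd z^2))
      + real a * snd z ^ b * \<Phi>1 z + real b * fst z ^ a * \<Phi>2 (snd z, fst z) + real a * real b * \<Phi>3 z)"
  have "continuous_on Quad E" unfolding E_def
    by (intro continuous_intros continuous_on_compose2[OF cg] c\<Phi>1 c\<Phi>3
        continuous_on_compose2[OF c\<Phi>2]) (auto simp: Quad_def)
  moreover have "E (s,t) = Rop a b g s t" if "0 < s" "0 < t" for s t
    using that \<Phi>1[of s t] \<Phi>2[of t s] \<Phi>3[of s t]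
    unfolding Rop_eq_power_form[OF that] E_def by (simp add: integral_unique)
  ultimately show ?thesis using that by blast
qed

lemma Dspace_cont_supp:
  assumes "\<zeta> \<in> Dspace c R" "0 < R"
  shows "cont_supp R \<zeta>"
  using assms unfolding Dspace_def cont_supp_def by (auto dest: less_trans)

lemma tail_int_eq_fun: "(\<lambda>t. integral {t..} (\<lambda>r. f r * r powr (c - 1))) = tail_int c f"
  by (simp add: tail_int_def fun_eq_iff)

lemma Dspace_tail_int_tendsto: "\<zeta> \<in> Dspace c R \<Longrightarrow> \<exists>L. (tail_int c \<zeta> \<longlongrightarrow> L) (at_right 0)"
  unfolding Dspace_def tail_int_eq_fun by auto

lemma Dspace_weighted_tendsto: "\<zeta> \<in> Dspace c R \<Longrightarrow> ((\<lambda>t. t powr c * \<zeta> t) \<longlongrightarrow> 0) (at_right 0)"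
  unfolding Dspace_def by auto

lemma bounded_pos_if_tendsto_at_right_0:
  fixes h :: "real \<Rightarrow> real"
  assumes ch: "continuous_on {0<..} h" and L: "(h \<longlongrightarrow> L) (at_right 0)"
    and hz: "\<And>x. R < x \<Longrightarrow> h x = 0"
  obtains B where "\<And>x. 0 < x \<Longrightarrow> \<bar>h x\<bar> \<le> B"
proof -
  obtain d where d: "d > 0" "\<And>y. 0 < y \<Longrightarrow> y < d \<Longrightarrow> dist (h y) L < 1"
    using tendstoD[OF L zero_less_one] unfolding eventually_at_right_field by auto
  have "compact (h ` {d..R})"
    by (rule compact_continuous_image[OF continuous_on_subset[OF ch]]) (use d in auto)
  then obtain B where B: "\<And>y. y \<in> h ` {d..R} \<Longrightarrow> norm y \<le> B"
    using compact_imp_bounded bounded_iff by metis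
  have "\<bar>h x\<bar> \<le> max (\<bar>L\<bar> + 1) B" if x: "0 < x" for x
  proof (cases "x < d")
    case True
    then have "\<bar>h x - L\<bar> < 1" using d x by (simp add: dist_real_def)
    then show ?thesis by linarith
  next
    case False
    then show ?thesis using B[of "h x"] hz[of x] by (cases "x \<le> R") auto
  qed
  then show ?thesis using that by blast
qed

lemma Dspace_bounds:
  assumes D: "\<zeta> \<in> Dspace c R" and R: "0 < R" and x: "0 < x"
  shows "\<bar>x powr c * \<zeta> x\<bar> \<le> (SUP t\<in>{0<..}. \<bar>t powr c * \<zeta> t\<bar>)"
    and "\<bar>tail_int c \<zeta> x\<bar> \<le> (SUP t\<in>{0<..}. \<bar>integral {t..} (\<lambda>r. \<zeta> r * r powr (c - 1))\<bar>)"
proof -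
  have f: "cont_supp R \<zeta>" by (rule Dspace_cont_supp[OF D R])
  obtain B where "\<And>x. 0 < x \<Longrightarrow> \<bar>x powr c * \<zeta> x\<bar> \<le> B"
  proof (rule bounded_pos_if_tendsto_at_right_0[OF _ Dspace_weighted_tendsto[OF D]])
    show "continuous_on {0<..} (\<lambda>t. t powr c * \<zeta> t)"
      by (intro continuous_intros cont_supp_continuous_on[OF f]) auto
    show "\<And>x. R < x \<Longrightarrow> x powr c * \<zeta> x = 0" using cont_supp_vanishes[OF f] by simp
  qed blast
  then show "\<bar>x powr c * \<zeta> x\<bar> \<le> (SUP t\<in>{0<..}. \<bar>t powr c * \<zeta> t\<bar>)"
    using x by (intro cSUP_upper bdd_aboveI2) auto
  obtain L where L: "(tail_int c \<zeta> \<longlongrightarrow> L) (at_right 0)" using Dspace_tail_int_tendsto[OF D] by blast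
  obtain B' where "\<And>x. 0 < x \<Longrightarrow> \<bar>tail_int c \<zeta> x\<bar> \<le> B'"
    using bounded_pos_if_tendsto_at_right_0[OF continuous_on_tail_int[OF f] L tail_int_vanishes[OF f]]
    by blast
  then show "\<bar>tail_int c \<zeta> x\<bar> \<le> (SUP t\<in>{0<..}. \<bar>integral {t..} (\<lambda>r. \<zeta> r * r powr (c - 1))\<bar>)"
    using x unfolding tail_int_def by (intro cSUP_upper bdd_aboveI2) auto
qed

lemma tail_int_diff:
  assumes f: "cont_supp R f" and g: "cont_supp R g" and x: "0 < x"
  shows "tail_int c (\<lambda>t. f t - g t) x = tail_int c f x - tail_int c g x"
proof -
  have K: "R < R + 1" by simp
  have "((\<lambda>r. f r * r powr (c - 1) - g r * r powr (c - 1)) has_integral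
      (tail_int c f x - tail_int c g x)) {x..}"
    using has_integral_diff[OF has_integral_tail_int[OF f x K] has_integral_tail_int[OF g x K]]
    by (simp add: tail_int_eq_integral_Icc[OF f x K] tail_int_eq_integral_Icc[OF g x K])
  then show ?thesis unfolding tail_int_def by (simp add: left_diff_distrib integral_unique)
qed

lemma Dspace_diff:
  assumes D1: "\<eta> \<in> Dspace c R" and D2: "\<zeta> \<in> Dspace c R" and R: "0 < R"
  shows "(\<lambda>t. \<eta> t - \<zeta> t) \<in> Dspace c R"
proof -
  have f: "cont_supp R \<eta>" and g: "cont_supp R \<zeta>" using Dspace_cont_supp D1 D2 R by auto
  have "((\<lambda>t. t powr c * \<eta> t - t powr c * \<zeta> t) \<longlongrightarrow> 0 - 0) (at_right 0)"
    by (intro tendsto_diff Dspace_weighted_tendsto[OF D1] Dspace_weighted_tendsto[OF D2])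
  then have weighted: "((\<lambda>t. t powr c * (\<eta> t - \<zeta> t)) \<longlongrightarrow> 0) (at_right 0)"
    by (simp add: right_diff_distrib)
  obtain L1 where L1: "(tail_int c \<eta> \<longlongrightarrow> L1) (at_right 0)" using Dspace_tail_int_tendsto[OF D1] by blast
  obtain L2 where L2: "(tail_int c \<zeta> \<longlongrightarrow> L2) (at_right 0)" using Dspace_tail_int_tendsto[OF D2] by blast
  have "((\<lambda>x. tail_int c \<eta> x - tail_int c \<zeta> x) \<longlongrightarrow> L1 - L2) (at_right 0)"
    by (intro tendsto_diff L1 L2)
  moreover have "\<forall>\<^sub>F x in at_right 0. tail_int c \<eta> x - tail_int c \<zeta> x = tail_int c (\<lambda>t. \<eta> t - \<zeta> t) x"
    using eventually_at_right_less[of "0::real"] by eventually_elim (simp add: tail_int_diff[OF f g])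
  ultimately have "(tail_int c (\<lambda>t. \<eta> t - \<zeta> t) \<longlongrightarrow> L1 - L2) (at_right 0)"
    by (rule Lim_transform_eventually)
  then show ?thesis
    using cont_supp_diff[OF f g] weighted R unfolding Dspace_def cont_supp_def tail_int_eq_fun
    by (auto simp: not_le) (metis not_le)
qed

definition trunc_below :: "real \<Rightarrow> (real \<Rightarrow> real) \<Rightarrow> real \<Rightarrow> real" where
  "trunc_below \<delta> f r = f (max r \<delta>)"

lemma continuous_on_trunc_below:
  assumes "cont_supp R f" "0 < \<delta>"
  shows "continuous_on S (trunc_below \<delta> f)"
  unfolding trunc_below_def
  by (rule continuous_on_compose2[OF cont_supp_continuous_on[OF assms(1)]])
     (use assms(2) in \<open>auto intro!: continuous_intros simp: less_max_iff_disj\<close>)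

lemma cont_supp_trunc_below:
  assumes "cont_supp R f" "0 < \<delta>"
  shows "cont_supp R (trunc_below \<delta> f)"
  using continuous_on_trunc_below[OF assms] cont_supp_vanishes[OF assms(1)]
  unfolding cont_supp_def trunc_below_def by (simp add: less_max_iff_disj)

lemma integral_powr_le:
  fixes x \<delta> c :: real
  assumes "0 < x" "x \<le> \<delta>" "1 \<le> c"
  shows "\<bar>integral {x..\<delta>} (\<lambda>r. r powr (c - 1))\<bar> \<le> \<delta> powr c"
proof -
  have "norm (integral {x..\<delta>} (\<lambda>r. r powr (c - 1))) \<le> integral {x..\<delta>} (\<lambda>r. \<delta> powr (c - 1))"
  proof (rule integral_norm_bound_integral)
    show "(\<lambda>r. r powr (c - 1)) integrable_on {x..\<delta>}"
      by (rule integrable_continuous_real) (use assms in \<open>auto intro!: continuous_intros\<close>)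
    show "(\<lambda>r. \<delta> powr (c - 1)) integrable_on {x..\<delta>}" by (rule integrable_const_ivl)
    fix r assume "r \<in> {x..\<delta>}"
    then show "norm (r powr (c - 1)) \<le> \<delta> powr (c - 1)" using assms by (auto intro!: powr_mono2)
  qed
  also have "\<dots> = (\<delta> - x) * \<delta> powr (c - 1)" using assms by simp
  also have "\<dots> \<le> \<delta> * \<delta> powr (c - 1)" using assms by (intro mult_right_mono) auto
  also have "\<dots> = \<delta> powr c" using assms by (simp add: powr_mult_base)
  finally show ?thesis by simp
qed

lemma tail_int_diff_trunc_below:
  assumes f: "cont_supp R f" and x: "0 < x" "x < \<delta>"
  shows "tail_int c (\<lambda>r. f r - trunc_below \<delta> f r) x
       = tail_int c f x - tail_int c f \<delta> - f \<delta> * integral {x..\<delta>} (\<lambda>r. r powr (c - 1))"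
proof -
  define g where "g = (\<lambda>r. f r * r powr (c - 1))"
  define K where "K = max R \<delta> + 1"
  have K: "R < K" "\<delta> < K" unfolding K_def by auto
  have cg: "continuous_on {x..K} g" unfolding g_def by (rule continuous_on_tail_integrand[OF f x(1)])
  have cpow: "continuous_on {x..\<delta>} (\<lambda>r. r powr (c - 1))"
    by (intro continuous_intros) (use x in auto)
  have "continuous_on {x..\<delta>} (\<lambda>r. (f r - trunc_below \<delta> f r) * r powr (c - 1))"
    by (intro continuous_intros cont_supp_continuous_on_Icc[OF f x(1)]
        continuous_on_trunc_below[OF f]) (use x in auto)
  then have "tail_int c (\<lambda>r. f r - trunc_below \<delta> f r) x
      = integral {x..\<delta>} (\<lambda>r. (f r - trunc_below \<delta> f r) * r powr (c - 1))"
    unfolding tail_int_def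
    by (intro integral_unique has_integral_atLeast_vanishing) (auto simp: trunc_below_def)
  also have "\<dots> = integral {x..\<delta>} (\<lambda>r. g r - f \<delta> * r powr (c - 1))"
    by (rule integral_cong) (auto simp: g_def trunc_below_def algebra_simps)
  also have "\<dots> = integral {x..\<delta>} g - f \<delta> * integral {x..\<delta>} (\<lambda>r. r powr (c - 1))"
    using integrable_continuous_real[OF continuous_on_subset[OF cg]] K
      integrable_on_cmult_left[OF integrable_continuous_real[OF cpow]]
    by (subst integral_diff) auto
  also have "integral {x..\<delta>} g = tail_int c f x - tail_int c f \<delta>"
  proof -
    have "integral {x..\<delta>} g + integral {\<delta>..K} g = integral {x..K} g"
      by (rule Henstock_Kurzweil_Integration.integral_combine)
         (use x K integrable_continuous_real[OF cg] in auto)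
    then show ?thesis
      using tail_int_eq_integral_Icc[OF f x(1) K(1)] tail_int_eq_integral_Icc[OF f _ K(1), of \<delta>] x
      by (simp add: g_def)
  qed
  finally show ?thesis .
qed

lemma Dspace_trunc_below_approx:
  assumes D: "\<zeta> \<in> Dspace c R" and R: "0 < R" and c: "1 \<le> c" and e: "0 < \<epsilon>"
  obtains d where "0 < d" and "\<And>\<delta> x. 0 < \<delta> \<Longrightarrow> \<delta> < d \<Longrightarrow> 0 < x \<Longrightarrow>
      \<bar>x powr c * (\<zeta> x - trunc_below \<delta> \<zeta> x)\<bar> \<le> 2 * \<epsilon>
    \<and> \<bar>tail_int c (\<lambda>r. \<zeta> r - trunc_below \<delta> \<zeta> r) x\<bar> \<le> 3 * \<epsilon>"
proof -
  have f: "cont_supp R \<zeta>" by (rule Dspace_cont_supp[OF D R])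
  obtain L where L: "(tail_int c \<zeta> \<longlongrightarrow> L) (at_right 0)" using Dspace_tail_int_tendsto[OF D] by blast
  have "\<forall>\<^sub>F x in at_right 0. \<bar>x powr c * \<zeta> x\<bar> < \<epsilon> \<and> \<bar>tail_int c \<zeta> x - L\<bar> < \<epsilon>"
    using tendstoD[OF Dspace_weighted_tendsto[OF D] e] tendstoD[OF L e]
    by eventually_elim (auto simp: dist_real_def)
  then obtain d where d: "0 < d"
    and small: "\<And>y. 0 < y \<Longrightarrow> y < d \<Longrightarrow> \<bar>y powr c * \<zeta> y\<bar> < \<epsilon> \<and> \<bar>tail_int c \<zeta> y - L\<bar> < \<epsilon>"
    unfolding eventually_at_right_field by auto
  show ?thesis
  proof (rule that[OF d], intro conjI)
    fix \<delta> x :: real assume \<delta>: "0 < \<delta>" "\<delta> < d" and x: "0 < x"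
    note small_\<delta> = small[OF \<delta>]
    show "\<bar>x powr c * (\<zeta> x - trunc_below \<delta> \<zeta> x)\<bar> \<le> 2 * \<epsilon>"
    proof (cases "x < \<delta>")
      case True
      have "x powr c * \<bar>\<zeta> \<delta>\<bar> \<le> \<delta> powr c * \<bar>\<zeta> \<delta>\<bar>"
        using True x c by (intro mult_right_mono powr_mono2) auto
      then have "\<bar>x powr c * \<zeta> \<delta>\<bar> < \<epsilon>" using small_\<delta> by (simp add: abs_mult)
      then show ?thesis
        using small[OF x] True \<delta> by (simp add: trunc_below_def right_diff_distrib) linarith
    qed (use e in \<open>simp add: trunc_below_def\<close>)
    show "\<bar>tail_int c (\<lambda>r. \<zeta> r - trunc_below \<delta> \<zeta> r) x\<bar> \<le> 3 * \<epsilon>"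
    proof (cases "x < \<delta>")
      case True
      have "\<bar>\<zeta> \<delta> * integral {x..\<delta>} (\<lambda>r. r powr (c - 1))\<bar> \<le> \<bar>\<delta> powr c * \<zeta> \<delta>\<bar>"
        using integral_powr_le[OF x _ c, of \<delta>] True by (simp add: abs_mult mult_left_mono mult.commute)
      moreover have "x < d" using True \<delta> by simp
      ultimately show ?thesis
        unfolding tail_int_diff_trunc_below[OF f x True] using small[OF x] small_\<delta> by linarith
    next
      case False
      then have "tail_int c (\<lambda>r. \<zeta> r - trunc_below \<delta> \<zeta> r) x = integral {x..} (\<lambda>r. 0)"
        unfolding tail_int_def by (intro integral_cong) (auto simp: trunc_below_def)
      then show ?thesis using e by simp
    qed
  qed
qed

section \<open>Existence of the extension and continuity of the map\<close>

lemma tendsto_Quad_diagonal: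
  assumes ch: "continuous_on Quad h" and z: "(s,t) \<in> Quad"
  shows "(\<lambda>n. h (s + 1 / real (Suc n), t + 1 / real (Suc n))) \<longlonglongrightarrow> h (s,t)"
proof -
  have "(\<lambda>n. 1 / real (Suc n)) \<longlonglongrightarrow> 0"
    using LIMSEQ_inverse_real_of_nat by (simp add: inverse_eq_divide)
  then have "(\<lambda>n. (s + 1 / real (Suc n), t + 1 / real (Suc n))) \<longlonglongrightarrow> (s + 0, t + 0)"
    by (intro tendsto_intros)
  moreover have "(s + 1 / real (Suc n), t + 1 / real (Suc n)) \<in> Quad" for n
    using z unfolding Quad_def by auto
  ultimately show ?thesis
    using ch z unfolding continuous_on_sequentially by (auto simp: o_def)
qed

lemma Quad_bound_from_interior:
  fixes h :: "real \<times> real \<Rightarrow> real"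
  assumes ch: "continuous_on Quad h" and B: "\<And>s t. 0 < s \<Longrightarrow> 0 < t \<Longrightarrow> \<bar>h (s,t)\<bar> \<le> C"
    and z: "z \<in> Quad"
  shows "\<bar>h z\<bar> \<le> C"
proof -
  obtain s t where zst: "z = (s,t)" by (cases z)
  have st: "0 \<le> s" "0 \<le> t" using z zst unfolding Quad_def by auto
  have "(\<lambda>n. \<bar>h (s + 1 / real (Suc n), t + 1 / real (Suc n))\<bar>) \<longlonglongrightarrow> \<bar>h (s,t)\<bar>"
    using tendsto_Quad_diagonal[OF ch] z zst by (intro tendsto_rabs) simp
  moreover have "\<bar>h (s + 1 / real (Suc n), t + 1 / real (Suc n))\<bar> \<le> C" for n
    by (rule B) (use st in \<open>auto intro: add_nonneg_pos\<close>)
  ultimately show ?thesis unfolding zst by (intro LIMSEQ_le_const2) auto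
qed

lemma uniform_limit_extension:
  fixes E :: "nat \<Rightarrow> real \<times> real \<Rightarrow> real"
  assumes cE: "\<And>n. continuous_on Quad (E n)"
    and conv: "\<And>e. 0 < e \<Longrightarrow> \<exists>N. \<forall>n\<ge>N. \<forall>s>0. \<forall>t>0. \<bar>E n (s,t) - G s t\<bar> \<le> e"
  obtains l where "continuous_on Quad l" and "\<And>s t. 0 < s \<Longrightarrow> 0 < t \<Longrightarrow> l (s,t) = G s t"
proof -
  have "uniformly_Cauchy_on Quad E"
    unfolding uniformly_Cauchy_on_def
  proof (intro allI impI)
    fix e :: real assume e: "0 < e"
    obtain N where N: "\<And>n s t. N \<le> n \<Longrightarrow> 0 < s \<Longrightarrow> 0 < t \<Longrightarrow> \<bar>E n (s,t) - G s t\<bar> \<le> e/3"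
      using conv[of "e/3"] e by auto
    have "\<bar>E m z - E n z\<bar> \<le> 2*e/3" if "z \<in> Quad" "N \<le> m" "N \<le> n" for z m n
    proof (rule Quad_bound_from_interior[OF _ _ \<open>z \<in> Quad\<close>])
      show "continuous_on Quad (\<lambda>z. E m z - E n z)" by (intro continuous_intros cE)
      fix s t :: real assume "0 < s" "0 < t"
      then show "\<bar>E m (s,t) - E n (s,t)\<bar> \<le> 2*e/3"
        using N[of m s t] N[of n s t] that by linarith
    qed
    then show "\<exists>M. \<forall>x\<in>Quad. \<forall>m\<ge>M. \<forall>n\<ge>M. dist (E m x) (E n x) < e"
      using e by (intro exI[of _ N]) (force simp: dist_real_def)
  qed
  then obtain l where ul: "uniform_limit Quad E l sequentially"
    using Cauchy_uniformly_convergent unfolding uniformly_convergent_on_def by blast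
  have "continuous_on Quad l"
    by (rule uniform_limit_theorem[OF _ ul]) (auto simp: cE)
  moreover have "l (s,t) = G s t" if st: "0 < s" "0 < t" for s t
  proof (rule LIMSEQ_unique)
    have "(s,t) \<in> Quad" using st unfolding Quad_def by auto
    then show "(\<lambda>n. E n (s,t)) \<longlonglongrightarrow> l (s,t)" by (rule tendsto_uniform_limitI[OF ul])
    show "(\<lambda>n. E n (s,t)) \<longlonglongrightarrow> G s t"
    proof (rule LIMSEQ_I)
      fix r :: real assume "0 < r"
      then obtain N where "\<And>n. N \<le> n \<Longrightarrow> \<bar>E n (s,t) - G s t\<bar> \<le> r/2"
        using conv[of "r/2"] st by auto
      then show "\<exists>N. \<forall>n\<ge>N. norm (E n (s,t) - G s t) < r" using \<open>0 < r\<close> by force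
    qed
  qed
  ultimately show ?thesis using that by blast
qed

lemma closure_support_extension:
  assumes f: "cont_supp R f" and cl: "continuous_on Quad l"
    and agree: "\<And>s t. 0 < s \<Longrightarrow> 0 < t \<Longrightarrow> l (s,t) = Rop a b f s t"
  shows "closure {x \<in> Quad. l x \<noteq> 0} \<subseteq> cball 0 R"
proof (rule closure_minimal[OF _ closed_cball], rule subsetI, rule ccontr)
  fix z assume "z \<in> {x \<in> Quad. l x \<noteq> 0}" and "z \<notin> cball 0 R"
  then obtain s t where z: "z = (s,t)" "0 \<le> s" "0 \<le> t" "l (s,t) \<noteq> 0" and big: "R < sqrt (s^2 + t^2)"
    by (cases z) (auto simp: Quad_def norm_Pair)
  have zero: "l (s + 1 / real (Suc n), t + 1 / real (Suc n)) = 0" for n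
  proof -
    define s' t' where "s' = s + 1 / real (Suc n)" and "t' = t + 1 / real (Suc n)"
    have st': "0 < s'" "0 < t'" unfolding s'_def t'_def using z by (auto intro: add_nonneg_pos)
    have "s^2 + t^2 \<le> s'^2 + t'^2" unfolding s'_def t'_def using z by (intro add_mono power_mono) auto
    then have "sqrt (s^2 + t^2) \<le> sqrt (s'^2 + t'^2)" by (rule real_sqrt_le_mono)
    then have "R < sqrt (s'^2 + t'^2)" using big by linarith
    from Rop_vanishes[OF f st' this] show ?thesis using agree[OF st'] unfolding s'_def t'_def by simp
  qed
  have "(s,t) \<in> Quad" using z by (simp add: Quad_def)
  from tendsto_Quad_diagonal[OF cl this] have "(\<lambda>n. 0::real) \<longlonglongrightarrow> l (s,t)"
    by (simp only: zero)
  then show False using z(4) by (simp add: LIMSEQ_const_iff)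
qed

lemma Rop_trunc_below_uniform:
  assumes ab: "1 \<le> a + b" and R: "0 < R" and D: "\<zeta> \<in> Dspace (real (a+b)) R" and e: "0 < e"
  obtains d where "0 < d" and "\<And>\<delta> s t. 0 < \<delta> \<Longrightarrow> \<delta> < d \<Longrightarrow> 0 < s \<Longrightarrow> 0 < t \<Longrightarrow>
      \<bar>Rop a b (trunc_below \<delta> \<zeta>) s t - Rop a b \<zeta> s t\<bar> \<le> e"
proof -
  define C where "C = (1 + 2 * real (a + b))^2"
  have C: "0 < C" unfolding C_def by (simp add: add_pos_nonneg)
  have f: "cont_supp R \<zeta>" by (rule Dspace_cont_supp[OF D R])
  obtain d where d: "0 < d" and approx: "\<And>\<delta> x. 0 < \<delta> \<Longrightarrow> \<delta> < d \<Longrightarrow> 0 < x \<Longrightarrow>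
      \<bar>x powr real (a+b) * (\<zeta> x - trunc_below \<delta> \<zeta> x)\<bar> \<le> 2 * (e / (5 * C))
    \<and> \<bar>tail_int (real (a+b)) (\<lambda>r. \<zeta> r - trunc_below \<delta> \<zeta> r) x\<bar> \<le> 3 * (e / (5 * C))"
    using Dspace_trunc_below_approx[OF D R _ divide_pos_pos[OF e, of "5 * C"]] ab C by auto
  show ?thesis
  proof (rule that[OF d])
    fix \<delta> s t :: real assume \<delta>: "0 < \<delta>" "\<delta> < d" and st: "0 < s" "0 < t"
    have ft: "cont_supp R (trunc_below \<delta> \<zeta>)" by (rule cont_supp_trunc_below[OF f \<delta>(1)])
    have A0: "\<And>z. 0 < z \<Longrightarrow> \<bar>z powr real (a+b) * (\<zeta> z - trunc_below \<delta> \<zeta> z)\<bar> \<le> 2 * (e / (5 * C))"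
      and A1: "\<And>z. 0 < z \<Longrightarrow> \<bar>tail_int (real (a+b)) (\<lambda>r. \<zeta> r - trunc_below \<delta> \<zeta> r) z\<bar> \<le> 3 * (e / (5 * C))"
      using approx[OF \<delta>] by auto
    have "\<bar>Rop a b (\<lambda>x. \<zeta> x - trunc_below \<delta> \<zeta> x) s t\<bar> \<le> C * (2 * (e / (5 * C)) + 3 * (e / (5 * C)))"
      using Rop_bound[OF cont_supp_diff[OF f ft] st A0 A1] unfolding C_def .
    also have "\<dots> = e" using C by simp
    finally show "\<bar>Rop a b (trunc_below \<delta> \<zeta>) s t - Rop a b \<zeta> s t\<bar> \<le> e"
      unfolding Rop_diff[OF f ft st] by linarith
  qed
qed

lemma Rop_extension_exists:
  assumes ab: "1 \<le> a + b" and R: "0 < R" and D: "\<zeta> \<in> Dspace (real (a+b)) R"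
  shows "\<exists>F. is_ext a b R \<zeta> F"
proof -
  have f: "cont_supp R \<zeta>" by (rule Dspace_cont_supp[OF D R])
  define \<zeta>n where "\<zeta>n = (\<lambda>n::nat. trunc_below (1 / real (Suc n)) \<zeta>)"
  have "\<exists>E. continuous_on Quad E \<and> (\<forall>s>0. \<forall>t>0. E (s,t) = Rop a b (\<zeta>n n) s t)" for n
    using Rop_continuous_extension[OF continuous_on_trunc_below[OF f]
        cont_supp_vanishes[OF cont_supp_trunc_below[OF f]]]
    unfolding \<zeta>n_def by (metis of_nat_0_less_iff zero_less_Suc zero_less_divide_1_iff)
  then obtain E where cE: "\<And>n. continuous_on Quad (E n)"
    and E: "\<And>n s t. 0 < s \<Longrightarrow> 0 < t \<Longrightarrow> E n (s,t) = Rop a b (\<zeta>n n) s t"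
    by metis
  have conv: "\<exists>N. \<forall>n\<ge>N. \<forall>s>0. \<forall>t>0. \<bar>E n (s,t) - Rop a b \<zeta> s t\<bar> \<le> e" if "0 < e" for e
  proof -
    obtain d where d: "0 < d" and close: "\<And>\<delta> s t. 0 < \<delta> \<Longrightarrow> \<delta> < d \<Longrightarrow> 0 < s \<Longrightarrow> 0 < t \<Longrightarrow>
        \<bar>Rop a b (trunc_below \<delta> \<zeta>) s t - Rop a b \<zeta> s t\<bar> \<le> e"
      using Rop_trunc_below_uniform[OF ab R D \<open>0 < e\<close>] by blast
    obtain N where N: "inverse (real (Suc N)) < d" using reals_Archimedean[OF d] by blast
    have "1 / real (Suc n) < d" if "N \<le> n" for n
    proof -
      have "1 / real (Suc n) \<le> inverse (real (Suc N))" using that by (simp add: inverse_eq_divide frac_le)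
      then show ?thesis using N by linarith
    qed
    then show ?thesis using close E unfolding \<zeta>n_def by (intro exI[of _ N]) auto
  qed
  obtain l where cl: "continuous_on Quad l" and agree: "\<And>s t. 0 < s \<Longrightarrow> 0 < t \<Longrightarrow> l (s,t) = Rop a b \<zeta> s t"
    using uniform_limit_extension[OF cE conv] by blast
  have "is_ext a b R \<zeta> l"
    unfolding is_ext_def using cl agree closure_support_extension[OF f cl agree] by blast
  then show ?thesis by blast
qed

lemma Rext_is_ext:
  assumes "1 \<le> a + b" "0 < R" "\<zeta> \<in> Dspace (real (a+b)) R"
  shows "is_ext a b R \<zeta> (Rext a b R \<zeta>)"
  unfolding Rext_def using Rop_extension_exists[OF assms] by (rule someI_ex)

lemma Rext_diff_le:
  assumes ab: "1 \<le> a + b" and R: "0 < R"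
    and D\<eta>: "\<eta> \<in> Dspace (real (a+b)) R" and D\<zeta>: "\<zeta> \<in> Dspace (real (a+b)) R"
  shows "(SUP x\<in>Quad. \<bar>Rext a b R \<eta> x - Rext a b R \<zeta> x\<bar>)
      \<le> (1 + 2 * real (a + b))^2 * Dnorm (real (a+b)) (\<lambda>t. \<eta> t - \<zeta> t)"
proof (rule cSUP_least)
  show "Quad \<noteq> {}" unfolding Quad_def by auto
  define \<xi> where "\<xi> = (\<lambda>t. \<eta> t - \<zeta> t)"
  have D\<xi>: "\<xi> \<in> Dspace (real (a+b)) R" unfolding \<xi>_def by (rule Dspace_diff[OF D\<eta> D\<zeta> R])
  have E\<eta>: "is_ext a b R \<eta> (Rext a b R \<eta>)" and E\<zeta>: "is_ext a b R \<zeta> (Rext a b R \<zeta>)"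
    using Rext_is_ext[OF ab R] D\<eta> D\<zeta> by auto
  fix x assume "x \<in> Quad"
  then show "\<bar>Rext a b R \<eta> x - Rext a b R \<zeta> x\<bar> \<le> (1 + 2 * real (a + b))^2 * Dnorm (real (a+b)) (\<lambda>t. \<eta> t - \<zeta> t)"
  proof (rule Quad_bound_from_interior[rotated 2])
    show "continuous_on Quad (\<lambda>x. Rext a b R \<eta> x - Rext a b R \<zeta> x)"
      using E\<eta> E\<zeta> unfolding is_ext_def by (intro continuous_intros) auto
    fix s t :: real assume st: "0 < s" "0 < t"
    have "Rext a b R \<eta> (s,t) - Rext a b R \<zeta> (s,t) = Rop a b \<xi> s t"
      using E\<eta> E\<zeta> st Rop_diff[OF Dspace_cont_supp[OF D\<eta> R] Dspace_cont_supp[OF D\<zeta> R] st]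
      unfolding is_ext_def \<xi>_def by auto
    moreover have "\<bar>Rop a b \<xi> s t\<bar> \<le> (1 + 2 * real (a + b))^2 * Dnorm (real (a+b)) \<xi>"
      unfolding Dnorm_def
      by (intro Rop_bound[OF Dspace_cont_supp[OF D\<xi> R] st] Dspace_bounds[OF D\<xi> R])
    ultimately show "\<bar>Rext a b R \<eta> (s,t) - Rext a b R \<zeta> (s,t)\<bar>
        \<le> (1 + 2 * real (a + b))^2 * Dnorm (real (a+b)) (\<lambda>t. \<eta> t - \<zeta> t)"
      unfolding \<xi>_def by simp
  qed
qed

theorem lemma3p7:
  fixes a b :: nat and R :: real
  assumes "a + b \<ge> 1" and "R > 0"
  shows "(\<forall>\<zeta>\<in>Dspace (real (a + b)) R. \<exists>F. is_ext a b R \<zeta> F)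
    \<and> (\<forall>\<zeta>\<in>Dspace (real (a + b)) R. \<forall>\<epsilon>>0. \<exists>\<delta>>0. \<forall>\<eta>\<in>Dspace (real (a + b)) R.
          Dnorm (real (a + b)) (\<lambda>t. \<eta> t - \<zeta> t) < \<delta> \<longrightarrow>
          (SUP x\<in>Quad. \<bar>Rext a b R \<eta> x - Rext a b R \<zeta> x\<bar>) < \<epsilon>)"
proof (intro conjI ballI allI impI)
  fix \<zeta> assume "\<zeta> \<in> Dspace (real (a + b)) R"
  then show "\<exists>F. is_ext a b R \<zeta> F" using Rop_extension_exists assms by blast
next
  fix \<zeta> and \<epsilon> :: real assume D\<zeta>: "\<zeta> \<in> Dspace (real (a + b)) R" and \<epsilon>: "0 < \<epsilon>"
  define C where "C = (1 + 2 * real (a + b))^2"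
  have C: "0 < C" unfolding C_def by (simp add: add_pos_nonneg)
  show "\<exists>\<delta>>0. \<forall>\<eta>\<in>Dspace (real (a + b)) R. Dnorm (real (a + b)) (\<lambda>t. \<eta> t - \<zeta> t) < \<delta> \<longrightarrow>
      (SUP x\<in>Quad. \<bar>Rext a b R \<eta> x - Rext a b R \<zeta> x\<bar>) < \<epsilon>"
  proof (intro exI[of _ "\<epsilon> / C"] conjI ballI impI)
    show "0 < \<epsilon> / C" using \<epsilon> C by simp
    fix \<eta> assume D\<eta>: "\<eta> \<in> Dspace (real (a + b)) R"
      and close: "Dnorm (real (a + b)) (\<lambda>t. \<eta> t - \<zeta> t) < \<epsilon> / C"
    have "(SUP x\<in>Quad. \<bar>Rext a b R \<eta> x - Rext a b R \<zeta> x\<bar>) \<le> C * Dnorm (real (a + b)) (\<lambda>t. \<eta> t - \<zeta> t)"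
      unfolding C_def using Rext_diff_le assms D\<eta> D\<zeta> by simp
    also have "\<dots> < \<epsilon>" using close C by (simp add: pos_less_divide_eq mult.commute)
    finally show "(SUP x\<in>Quad. \<bar>Rext a b R \<eta> x - Rext a b R \<zeta> x\<bar>) < \<epsilon>" .
  qed
qed

end
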